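(* Consider the procedure "Boosting Using SDP" with inputs $\hat A\in\mathbb R^{n\times n}$, parameters $0<\zeta<1$, $d>0$, $K\ge10^4$, and an initial labelling $\ell_{\mathrm{init}}\in\{-1,1\}^n$: set $\ell\leftarrow\ell_{\mathrm{init}}$; then $\lceil10\log n\rceil$ times, compute an optimal solution of the Boosting SDP with inputs $\hat A,\ell,\zeta,d,K$, flip the sign of $\ell_i$ for every $i$ with $w_i\ge1-1/\sqrt K$, and replace $\ell$ by the result; output $\ell$. Suppose there are a subset $S\subseteq[n]$ with $|S|\ge(1-\gamma)n$ where $\gamma\le0.1\zeta$, an $n\times n$ matrix $F$, and a labelling $\tilde\ell\in\{-1,1\}^n$ with $\tilde L=\tilde\ell\tilde\ell^T$ such that: (1) $\ell_{\mathrm{init}}$ agrees with $\tilde\ell$ on at least $(1-0.1\zeta)n$ coordinates; (2) $(F\odot\tilde L)_{S\times S}$ is entrywise nonnegative; (3) $(\hat A-F)_{S\times S}=Y+Z$ with $\|Y\|_{\mathrm{op}}\le Kd$ and $|Z_{ij}|\le Kd/(\zeta n)$ for all $i,j$; (4) for every $T\subseteq S$ with $|T|\ge(1-\zeta)n$, the matrix $((\hat A-F)\odot\tilde L)_{T\times T}$ is resolvable with parameters $\big(10dK^3,\ 0.5dK(\gamma+\frac{n-|T|}{n})\big)$. Then the output agrees with $\tilde\ell$ on at least $(1-8\gamma)n$ coordinates.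
   Context: Notation: $J$ all-ones matrix, $\odot$ entrywise product, $\langle X,Y\rangle=\sum_{ij}X_{ij}Y_{ij}$, $\|\cdot\|_1$ trace norm, $\|\cdot\|_{\mathrm{op}}$ operator norm, $M_{S\times T}$ submatrix indexed by $S\times T$. Resolvability: an $m\times m$ matrix $X$ is $(d_1,d_2)$-resolvable if for all $x_1,\dots,x_m\in[0,1]$ with $\sum_ix_i\le10^{-6}m$, $\langle X,Y_x\rangle\ge d_1\sum_ix_i-d_2m$, where $(Y_x)_{ij}=x_i$. Pseudorectangles: $\mathcal R_n(\theta)$ is the set of $n\times n$ matrices $M$ with $0\le M_{ij}\le1$, $\sum_{ij}|M_{ij}|\le\theta^2n^2$, $\|M\|_1\le\theta n$. Approximate row selectors: $(M,x_1,\dots,x_n)\in\mathcal S_n(\theta,\delta)$ if $0\le M_{ij}\le1$, $0\le x_i\le1$, $\sum_ix_i\le\theta n$, and $M=Y_x-N$ for some $N\in\mathcal R_n(\sqrt{\theta\delta})$. Boosting SDP (inputs $\hat A,\ell$, parameters $\zeta,d,K$ with $0<\zeta<1$, $K\ge10^4$): variables $\rho\in[0,\zeta]$, $w\in\mathbb R^n$, $W\in\mathbb R^{n\times n}$, $N\in\mathcal R_n(\rho)$ with $0\le w_i\le1$, $\sum_iw_i\le\rho n$, $W_{ij}\ge0$, $W_{ij}=1-w_i-w_j+N_{ij}$ for all $i,j$, and for every $\rho'$ with $\rho/K\le\rho'\le\zeta$ and every $(M,x)\in\mathcal S_n(\rho',K\rho')$: $\langle\hat A\odot L\odot W,M\rangle\ge10dK^2\big(K\sum_ix_i(1-w_i)-\rho'n\big)$,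 where $L=\ell\ell^T$. Objective: minimize $\rho$. *)

theory Defs
  imports Complex_Main
begin

text \<open>Conventions: n x n matrices are functions nat => nat => real, only entries with
indices < n matter; vectors/labellings are nat => real, only indices < n matter.
The index set [n] is {..<n}.\<close>

definition trace_norm :: "nat \<Rightarrow> (nat \<Rightarrow> nat \<Rightarrow> real) \<Rightarrow> real" where
  "trace_norm n M = (THE s. \<exists>U V \<sigma>.
      (\<forall>i<n. \<forall>j<n. (\<Sum>k<n. U k i * U k j) = (if i = j then 1 else 0)) \<and>
      (\<forall>i<n. \<forall>j<n. (\<Sum>k<n. V k i * V k j) = (if i = j then 1 else 0)) \<and>
      (\<forall>k<n. 0 \<le> \<sigma> k) \<and>
      (\<forall>i<n. \<forall>j<n. M i j = (\<Sum>k<n. U i k * \<sigma> k * V j k)) \<and>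
      s = (\<Sum>k<n. \<sigma> k))"

definition op_norm_on :: "nat set \<Rightarrow> (nat \<Rightarrow> nat \<Rightarrow> real) \<Rightarrow> real" where
  "op_norm_on I M = Sup {sqrt (\<Sum>i\<in>I. (\<Sum>j\<in>I. M i j * x j)^2) | x.
                         (\<Sum>j\<in>I. (x j)^2) \<le> 1}"

definition resolvable_on :: "nat set \<Rightarrow> (nat \<Rightarrow> nat \<Rightarrow> real) \<Rightarrow> real \<Rightarrow> real \<Rightarrow> bool" where
  "resolvable_on T X d1 d2 \<longleftrightarrow>
     (\<forall>x :: nat \<Rightarrow> real. (\<forall>i\<in>T. 0 \<le> x i \<and> x i \<le> 1) \<and>
        (\<Sum>i\<in>T. x i) \<le> 10 powi (-6) * real (card T) \<longrightarrow>
        (\<Sum>i\<in>T. \<Sum>j\<in>T. X i j * x i) \<ge> d1 * (\<Sum>i\<in>T. x i) - d2 * real (card T))"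

definition pseudorect :: "nat \<Rightarrow> real \<Rightarrow> (nat \<Rightarrow> nat \<Rightarrow> real) \<Rightarrow> bool" where
  "pseudorect n \<theta> M \<longleftrightarrow>
     (\<forall>i<n. \<forall>j<n. 0 \<le> M i j \<and> M i j \<le> 1) \<and>
     (\<Sum>i<n. \<Sum>j<n. \<bar>M i j\<bar>) \<le> \<theta>^2 * (real n)^2 \<and>
     trace_norm n M \<le> \<theta> * real n"

definition row_selector :: "nat \<Rightarrow> real \<Rightarrow> real \<Rightarrow> (nat \<Rightarrow> nat \<Rightarrow> real) \<Rightarrow> (nat \<Rightarrow> real) \<Rightarrow> bool" where
  "row_selector n \<theta> \<delta> M x \<longleftrightarrow>
     (\<forall>i<n. \<forall>j<n. 0 \<le> M i j \<and> M i j \<le> 1) \<and>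
     (\<forall>i<n. 0 \<le> x i \<and> x i \<le> 1) \<and>
     (\<Sum>i<n. x i) \<le> \<theta> * real n \<and>
     (\<exists>N. pseudorect n (sqrt (\<theta> * \<delta>)) N \<and> (\<forall>i<n. \<forall>j<n. M i j = x i - N i j))"

definition boost_feasible ::
  "nat \<Rightarrow> (nat \<Rightarrow> nat \<Rightarrow> real) \<Rightarrow> (nat \<Rightarrow> real) \<Rightarrow> real \<Rightarrow> real \<Rightarrow> real \<Rightarrow>
   real \<Rightarrow> (nat \<Rightarrow> real) \<Rightarrow> (nat \<Rightarrow> nat \<Rightarrow> real) \<Rightarrow> (nat \<Rightarrow> nat \<Rightarrow> real) \<Rightarrow> bool" where
  "boost_feasible n A l \<zeta> d K \<rho> w W N \<longleftrightarrow>
     0 \<le> \<rho> \<and> \<rho> \<le> \<zeta> \<and> pseudorect n \<rho> N \<and>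
     (\<forall>i<n. 0 \<le> w i \<and> w i \<le> 1) \<and> (\<Sum>i<n. w i) \<le> \<rho> * real n \<and>
     (\<forall>i<n. \<forall>j<n. 0 \<le> W i j \<and> W i j = 1 - w i - w j + N i j) \<and>
     (\<forall>\<rho>' M x. \<rho> / K \<le> \<rho>' \<and> \<rho>' \<le> \<zeta> \<and> row_selector n \<rho>' (K * \<rho>') M x \<longrightarrow>
        (\<Sum>i<n. \<Sum>j<n. A i j * (l i * l j) * W i j * M i j)
          \<ge> 10 * d * K^2 * (K * (\<Sum>i<n. x i * (1 - w i)) - \<rho>' * real n))"

definition boost_optimal ::
  "nat \<Rightarrow> (nat \<Rightarrow> nat \<Rightarrow> real) \<Rightarrow> (nat \<Rightarrow> real) \<Rightarrow> real \<Rightarrow> real \<Rightarrow> real \<Rightarrow>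
   real \<Rightarrow> (nat \<Rightarrow> real) \<Rightarrow> (nat \<Rightarrow> nat \<Rightarrow> real) \<Rightarrow> (nat \<Rightarrow> nat \<Rightarrow> real) \<Rightarrow> bool" where
  "boost_optimal n A l \<zeta> d K \<rho> w W N \<longleftrightarrow>
     boost_feasible n A l \<zeta> d K \<rho> w W N \<and>
     (\<forall>\<rho>2 w2 W2 N2. boost_feasible n A l \<zeta> d K \<rho>2 w2 W2 N2 \<longrightarrow> \<rho> \<le> \<rho>2)"

definition boost_step ::
  "nat \<Rightarrow> (nat \<Rightarrow> nat \<Rightarrow> real) \<Rightarrow> real \<Rightarrow> real \<Rightarrow> real \<Rightarrow> (nat \<Rightarrow> real) \<Rightarrow> (nat \<Rightarrow> real) \<Rightarrow> bool" where
  "boost_step n A \<zeta> d K l l' \<longleftrightarrow>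
     (\<exists>\<rho> w W N. boost_optimal n A l \<zeta> d K \<rho> w W N \<and>
        (\<forall>i<n. l' i = (if w i \<ge> 1 - 1 / sqrt K then - l i else l i)))"

text \<open>l_out is a possible output of "Boosting Using SDP" (for some choice of optimal
solutions in each of the ceil(10 log n) rounds).\<close>
definition boosting_output ::
  "nat \<Rightarrow> (nat \<Rightarrow> nat \<Rightarrow> real) \<Rightarrow> real \<Rightarrow> real \<Rightarrow> real \<Rightarrow> (nat \<Rightarrow> real) \<Rightarrow> (nat \<Rightarrow> real) \<Rightarrow> bool" where
  "boosting_output n A \<zeta> d K linit lout \<longleftrightarrow>
     (\<exists>seq :: nat \<Rightarrow> nat \<Rightarrow> real.
        (\<forall>i<n. seq 0 i = linit i) \<and>
        (\<forall>t < nat \<lceil>10 * ln (real n)\<rceil>. boost_step n A \<zeta> d K (seq t) (seq (Suc t))) \<and>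
        (\<forall>i<n. lout i = seq (nat \<lceil>10 * ln (real n)\<rceil>) i))"

definition is_labelling :: "nat \<Rightarrow> (nat \<Rightarrow> real) \<Rightarrow> bool" where
  "is_labelling n l \<longleftrightarrow> (\<forall>i<n. l i = 1 \<or> l i = -1)"

definition agreements :: "nat \<Rightarrow> (nat \<Rightarrow> real) \<Rightarrow> (nat \<Rightarrow> real) \<Rightarrow> nat" where
  "agreements n l l' = card {i. i < n \<and> l i = l' i}"

end

theory Submission
  imports Defs "HOL-Analysis.Analysis"
begin

text \<open>Call a vertex bad if it lies outside S or is mislabelled. In every round the indicator of the
  bad set is feasible for the SDP with \<rho> n = |bad| + \<gamma> n: the residual (A - F) \<odot> L splits into a
  part of small operator norm, which trace duality pairs against pseudorectangles, and a part with
  small entries, and together with resolvability on the good vertices this verifies every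
  row-selector constraint. So the optimal weights w have mass at most |bad| + \<gamma> n and few vertices
  are flipped. Testing the constraint of the optimal solution with the row selector of the
  mislabelled vertices of S that are not flipped, against resolvability on the good vertices together
  with these, shows that there are at most 0.006 (|bad| + \<gamma> n) of them. Hence every round divides
  the number of errors by 40 up to an additive 4 \<gamma> n, and \<lceil>10 log n\<rceil> rounds leave at most 8 \<gamma> n
  errors. The hypotheses also force \<zeta> \<le> 10^-8 (test resolvability of S on a constant vector), which
  makes all vectors used here admissible for resolvability.\<close>

section \<open>Singular value decomposition and the trace norm\<close>

definition orthonormal_cols :: "nat \<Rightarrow> (nat \<Rightarrow> nat \<Rightarrow> real) \<Rightarrow> bool" where
  "orthonormal_cols n U \<longleftrightarrow> (\<forall>i<n. \<forall>j<n. (\<Sum>k<n. U k i * U k j) = (if i = j then 1 else 0))"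

definition is_svd ::
  "nat \<Rightarrow> (nat \<Rightarrow> nat \<Rightarrow> real) \<Rightarrow> (nat \<Rightarrow> nat \<Rightarrow> real) \<Rightarrow> (nat \<Rightarrow> nat \<Rightarrow> real) \<Rightarrow> (nat \<Rightarrow> real) \<Rightarrow> bool"
where
  "is_svd n M U V \<sigma> \<longleftrightarrow> orthonormal_cols n U \<and> orthonormal_cols n V \<and> (\<forall>k<n. 0 \<le> \<sigma> k) \<and>
      (\<forall>i<n. \<forall>j<n. M i j = (\<Sum>k<n. U i k * \<sigma> k * V j k))"

lemma orthonormal_cols_norm: "orthonormal_cols n U \<Longrightarrow> k < n \<Longrightarrow> (\<Sum>i<n. (U i k)^2) = 1"
  unfolding orthonormal_cols_def by (simp add: power2_eq_square)

lemma abs_sum_mult_le_sqrt: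
  fixes a b :: "nat \<Rightarrow> real"
  shows "\<bar>\<Sum>i\<in>I. a i * b i\<bar> \<le> sqrt (\<Sum>i\<in>I. (a i)^2) * sqrt (\<Sum>i\<in>I. (b i)^2)"
proof -
  have "\<bar>\<Sum>i\<in>I. a i * b i\<bar> = sqrt ((\<Sum>i\<in>I. a i * b i)^2)" by simp
  also have "\<dots> \<le> sqrt ((\<Sum>i\<in>I. (a i)^2) * (\<Sum>i\<in>I. (b i)^2))"
    using Cauchy_Schwarz_ineq_sum real_sqrt_le_mono by blast
  finally show ?thesis by (simp add: real_sqrt_mult)
qed

lemma sum_mult_le_sqrt:
  fixes a b :: "nat \<Rightarrow> real"
  shows "(\<Sum>i\<in>I. a i * b i) \<le> sqrt (\<Sum>i\<in>I. (a i)^2) * sqrt (\<Sum>i\<in>I. (b i)^2)"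
  using abs_sum_mult_le_sqrt[of a b I] by linarith

lemma bessel_inequality:
  assumes "orthonormal_cols n U"
  shows "(\<Sum>k<n. (\<Sum>i<n. U i k * a i)^2) \<le> (\<Sum>i<n. (a i)^2)"
proof -
  define c where "c k = (\<Sum>i<n. U i k * a i)" for k
  have cross: "(\<Sum>i<n. a i * (\<Sum>k<n. c k * U i k)) = (\<Sum>k<n. (c k)^2)"
  proof -
    have "(\<Sum>i<n. a i * (\<Sum>k<n. c k * U i k)) = (\<Sum>i<n. \<Sum>k<n. c k * (U i k * a i))"
      by (simp add: sum_distrib_left mult_ac)
    also have "\<dots> = (\<Sum>k<n. \<Sum>i<n. c k * (U i k * a i))" by (rule sum.swap)
    finally show ?thesis by (simp add: c_def sum_distrib_left power2_eq_square)
  qed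
  have sq: "(\<Sum>i<n. (\<Sum>k<n. c k * U i k)^2) = (\<Sum>k<n. (c k)^2)"
  proof -
    have "(\<Sum>i<n. (\<Sum>k<n. c k * U i k)^2) = (\<Sum>i<n. \<Sum>k<n. \<Sum>l<n. c k * c l * (U i k * U i l))"
      by (simp add: power2_eq_square sum_distrib_left sum_distrib_right mult_ac)
    also have "\<dots> = (\<Sum>k<n. \<Sum>l<n. \<Sum>i<n. c k * c l * (U i k * U i l))"
      by (subst sum.swap) (intro sum.cong refl sum.swap)
    also have "\<dots> = (\<Sum>k<n. \<Sum>l<n. c k * c l * (if k = l then 1 else 0))"
      using assms unfolding orthonormal_cols_def by (intro sum.cong refl) (simp add: sum_distrib_left[symmetric])
    finally show ?thesis by (simp add: power2_eq_square if_distrib cong: if_cong)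
  qed
  have "0 \<le> (\<Sum>i<n. (a i - (\<Sum>k<n. c k * U i k))^2)" by (simp add: sum_nonneg)
  also have "\<dots> = (\<Sum>i<n. (a i)^2) - 2 * (\<Sum>i<n. a i * (\<Sum>k<n. c k * U i k)) + (\<Sum>i<n. (\<Sum>k<n. c k * U i k)^2)"
    by (simp add: power2_diff sum.distrib sum_subtractf sum_distrib_left mult_ac)
  also have "\<dots> = (\<Sum>i<n. (a i)^2) - (\<Sum>k<n. (c k)^2)" using cross sq by simp
  finally show ?thesis by (simp add: c_def)
qed

lemma svd_bilinear_expand:
  assumes "is_svd n M U V \<sigma>"
  shows "(\<Sum>i<n. \<Sum>j<n. a i * M i j * b j) = (\<Sum>k<n. \<sigma> k * (\<Sum>i<n. a i * U i k) * (\<Sum>j<n. b j * V j k))"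
proof -
  have "(\<Sum>i<n. \<Sum>j<n. a i * M i j * b j) = (\<Sum>i<n. \<Sum>j<n. \<Sum>k<n. \<sigma> k * (a i * U i k) * (b j * V j k))"
    using assms unfolding is_svd_def by (intro sum.cong refl) (simp add: sum_distrib_left sum_distrib_right mult_ac)
  also have "\<dots> = (\<Sum>k<n. \<Sum>i<n. \<Sum>j<n. \<sigma> k * (a i * U i k) * (b j * V j k))"
    by (subst sum.swap) (intro sum.cong refl sum.swap)
  also have "\<dots> = (\<Sum>k<n. \<sigma> k * (\<Sum>i<n. a i * U i k) * (\<Sum>j<n. b j * V j k))"
    by (simp add: sum_distrib_left sum_distrib_right mult_ac)
  finally show ?thesis .
qed

text \<open>The trace norm is well defined: pairing M against any two orthonormal frames gives at most
  the sum of the singular values of any SVD of M, with equality for the frames of that SVD.\<close>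

lemma svd_frame_pairing_le:
  assumes svd: "is_svd n M U V \<sigma>" and U': "orthonormal_cols n U'" and V': "orthonormal_cols n V'"
  shows "(\<Sum>k<n. \<Sum>i<n. \<Sum>j<n. U' i k * M i j * V' j k) \<le> (\<Sum>m<n. \<sigma> m)"
proof -
  define a where "a k m = (\<Sum>i<n. U' i k * U i m)" for k m
  define b where "b k m = (\<Sum>j<n. V' j k * V j m)" for k m
  have "(\<Sum>k<n. \<Sum>i<n. \<Sum>j<n. U' i k * M i j * V' j k) = (\<Sum>k<n. \<Sum>m<n. \<sigma> m * a k m * b k m)"
    using svd_bilinear_expand[OF svd] unfolding a_def b_def by simp
  also have "\<dots> = (\<Sum>m<n. \<sigma> m * (\<Sum>k<n. a k m * b k m))"
    by (subst sum.swap) (simp add: sum_distrib_left mult.assoc)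
  also have "\<dots> \<le> (\<Sum>m<n. \<sigma> m * 1)"
  proof (rule sum_mono)
    fix m assume m: "m \<in> {..<n}"
    have "(\<Sum>k<n. (a k m)^2) \<le> 1" "(\<Sum>k<n. (b k m)^2) \<le> 1"
      using bessel_inequality[OF U', of "\<lambda>i. U i m"] bessel_inequality[OF V', of "\<lambda>j. V j m"]
        svd m orthonormal_cols_norm unfolding is_svd_def a_def b_def by auto
    then have "sqrt (\<Sum>k<n. (a k m)^2) * sqrt (\<Sum>k<n. (b k m)^2) \<le> 1"
      by (intro mult_le_one) (auto intro: sum_nonneg)
    then have "(\<Sum>k<n. a k m * b k m) \<le> 1"
      using sum_mult_le_sqrt[of "\<lambda>k. a k m" "\<lambda>k. b k m" "{..<n}"] by linarith
    moreover have "0 \<le> \<sigma> m" using svd m unfolding is_svd_def by auto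
    ultimately show "\<sigma> m * (\<Sum>k<n. a k m * b k m) \<le> \<sigma> m * 1"
      by (rule mult_left_mono)
  qed
  finally show ?thesis by simp
qed

lemma svd_frame_pairing_eq:
  assumes svd: "is_svd n M U V \<sigma>"
  shows "(\<Sum>k<n. \<Sum>i<n. \<Sum>j<n. U i k * M i j * V j k) = (\<Sum>m<n. \<sigma> m)"
proof -
  have "(\<Sum>k<n. \<Sum>i<n. \<Sum>j<n. U i k * M i j * V j k) =
        (\<Sum>k<n. \<Sum>m<n. \<sigma> m * (\<Sum>i<n. U i k * U i m) * (\<Sum>j<n. V j k * V j m))"
    using svd_bilinear_expand[OF svd] by simp
  also have "\<dots> = (\<Sum>k<n. \<Sum>m<n. \<sigma> m * (if k = m then 1 else 0) * (if k = m then 1 else 0))"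
    using svd unfolding is_svd_def orthonormal_cols_def by (intro sum.cong refl) auto
  finally show ?thesis by (simp add: if_distrib cong: if_cong)
qed

lemma trace_norm_svd:
  assumes "is_svd n M U V \<sigma>"
  shows "trace_norm n M = (\<Sum>k<n. \<sigma> k)"
  unfolding trace_norm_def
proof (rule the_equality)
  show "\<exists>U V \<sigma>'. (\<forall>i<n. \<forall>j<n. (\<Sum>k<n. U k i * U k j) = (if i = j then 1 else 0)) \<and>
      (\<forall>i<n. \<forall>j<n. (\<Sum>k<n. V k i * V k j) = (if i = j then 1 else 0)) \<and> (\<forall>k<n. 0 \<le> \<sigma>' k) \<and>
      (\<forall>i<n. \<forall>j<n. M i j = (\<Sum>k<n. U i k * \<sigma>' k * V j k)) \<and> (\<Sum>k<n. \<sigma> k) = (\<Sum>k<n. \<sigma>' k)"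
    using assms unfolding is_svd_def orthonormal_cols_def by blast
  fix s assume "\<exists>U V \<sigma>'. (\<forall>i<n. \<forall>j<n. (\<Sum>k<n. U k i * U k j) = (if i = j then 1 else 0)) \<and>
      (\<forall>i<n. \<forall>j<n. (\<Sum>k<n. V k i * V k j) = (if i = j then 1 else 0)) \<and> (\<forall>k<n. 0 \<le> \<sigma>' k) \<and>
      (\<forall>i<n. \<forall>j<n. M i j = (\<Sum>k<n. U i k * \<sigma>' k * V j k)) \<and> s = (\<Sum>k<n. \<sigma>' k)"
  then obtain U' V' \<sigma>' where svd': "is_svd n M U' V' \<sigma>'" and s: "s = (\<Sum>k<n. \<sigma>' k)"
    unfolding is_svd_def orthonormal_cols_def by blast
  show "s = (\<Sum>k<n. \<sigma> k)"
    using svd_frame_pairing_le[OF assms, of U' V'] svd_frame_pairing_eq[OF svd']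
      svd_frame_pairing_le[OF svd', of U V] svd_frame_pairing_eq[OF assms] assms svd'
    unfolding s is_svd_def by linarith
qed

definition unit_vector :: "nat \<Rightarrow> (nat \<Rightarrow> real) \<Rightarrow> bool" where
  "unit_vector p x \<longleftrightarrow> (\<forall>i. p \<le> i \<longrightarrow> x i = 0) \<and> (\<Sum>i<p. (x i)^2) = 1"

lemma compact_unit_vectors: "compact {x. unit_vector p x}"
proof -
  have "compactin (product_topology (\<lambda>_. euclidean) UNIV) (PiE UNIV (\<lambda>_::nat. {-1..1::real}))"
    by (subst compactin_PiE) auto
  moreover have "PiE UNIV (\<lambda>_::nat. {-1..1::real}) = {x. \<forall>i. x i \<in> {-1..1}}"
    by (auto simp: PiE_def extensional_def)
  ultimately have box: "compact {x::nat\<Rightarrow>real. \<forall>i. x i \<in> {-1..1}}"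
    by (simp add: euclidean_product_topology)
  have closed: "closed {x::nat\<Rightarrow>real. unit_vector p x}"
    unfolding unit_vector_def
    by (intro closed_Collect_conj closed_Collect_all closed_Collect_imp closed_Collect_eq continuous_intros)
       auto
  have "x i \<in> {-1..1}" if u: "unit_vector p x" for x :: "nat \<Rightarrow> real" and i
  proof (cases "i < p")
    case True
    then have "(x i)^2 \<le> (\<Sum>j<p. (x j)^2)" by (intro member_le_sum) auto
    then have "(x i)^2 \<le> 1" using u unfolding unit_vector_def by simp
    then show ?thesis using abs_square_le_1[of "x i"] by auto
  qed (use u in \<open>auto simp: unit_vector_def\<close>)
  then have "{x. unit_vector p x} = {x::nat\<Rightarrow>real. \<forall>i. x i \<in> {-1..1}} \<inter> {x. unit_vector p x}" by blast
  then show ?thesis using compact_Int_closed[OF box closed] by simp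
qed

lemma bilinear_form_attains_max:
  assumes "0 < p"
  obtains u v where "unit_vector p u" "unit_vector p v"
    "\<And>u' v'. unit_vector p u' \<Longrightarrow> unit_vector p v' \<Longrightarrow>
       (\<Sum>i<p. \<Sum>j<p. u' i * N i j * v' j) \<le> (\<Sum>i<p. \<Sum>j<p. u i * N i j * v j)"
proof -
  let ?S = "{x. unit_vector p x} \<times> {x. unit_vector p x}"
  let ?f = "\<lambda>q::(nat\<Rightarrow>real)\<times>(nat\<Rightarrow>real). (\<Sum>i<p. \<Sum>j<p. fst q i * N i j * snd q j)"
  have "(\<Sum>i<p. (if i = 0 then 1 else 0::real)^2) = (\<Sum>i<p. if i = 0 then 1 else 0)"
    by (rule sum.cong) auto
  also have "\<dots> = 1" using assms by simp
  finally have "(\<Sum>i<p. (if i = 0 then 1 else 0::real)^2) = 1" .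
  then have "unit_vector p (\<lambda>i. if i = 0 then 1 else 0)"
    using assms unfolding unit_vector_def by auto
  then have "?S \<noteq> {}" by blast
  moreover have "continuous_on ?S ?f"
    by (intro continuous_intros continuous_on_compose2[OF continuous_on_product_coordinates]) auto
  ultimately obtain q where "q \<in> ?S" "\<forall>y\<in>?S. ?f y \<le> ?f q"
    using continuous_attains_sup[OF compact_Times[OF compact_unit_vectors compact_unit_vectors]] by blast
  then show ?thesis by (intro that[of "fst q" "snd q"]) auto
qed

lemma maximiser_aligned:
  assumes u: "unit_vector p u" and mx: "\<And>u'. unit_vector p u' \<Longrightarrow> (\<Sum>i<p. u' i * a i) \<le> (\<Sum>i<p. u i * a i)"
  shows "0 \<le> (\<Sum>i<p. u i * a i)" and "\<forall>i<p. a i = (\<Sum>i<p. u i * a i) * u i"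
proof -
  define \<sigma> where "\<sigma> = (\<Sum>i<p. u i * a i)"
  define s2 where "s2 = (\<Sum>i<p. (a i)^2)"
  have u1: "(\<Sum>i<p. (u i)^2) = 1" using u unfolding unit_vector_def by simp
  have "0 \<le> \<sigma> \<and> (\<forall>i<p. a i = \<sigma> * u i)"
  proof (cases "s2 = 0")
    case True
    then have "\<forall>i<p. a i = 0"
      unfolding s2_def using sum_nonneg_eq_0_iff[of "{..<p}" "\<lambda>i. (a i)^2"] by auto
    then show ?thesis unfolding \<sigma>_def by simp
  next
    case False
    define r where "r = sqrt s2"
    have s2pos: "0 < s2" using False unfolding s2_def by (simp add: sum_nonneg order_le_neq_trans)
    then have rpos: "0 < r" and r2: "r^2 = s2" unfolding r_def by simp_all
    have "(\<Sum>i<p. (if i < p then a i / r else 0)^2) = s2 / r^2"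
      unfolding s2_def by (simp add: power_divide sum_divide_distrib)
    then have "unit_vector p (\<lambda>i. if i < p then a i / r else 0)"
      unfolding unit_vector_def using r2 s2pos by auto
    then have "s2 / r \<le> \<sigma>"
      using mx unfolding \<sigma>_def s2_def by (fastforce simp: sum_divide_distrib power2_eq_square)
    moreover have "s2 / r = r" using r2 rpos by (auto simp: power2_eq_square field_simps)
    moreover have "\<sigma> \<le> r"
      using sum_mult_le_sqrt[of u a "{..<p}"] u1 unfolding \<sigma>_def r_def s2_def by simp
    ultimately have sr: "\<sigma> = r" by simp
    have "(\<Sum>i<p. (u i - a i / r)^2) = (\<Sum>i<p. (u i)^2) - 2 * (\<Sum>i<p. u i * a i) / r + (\<Sum>i<p. (a i)^2) / r^2"
      by (simp add: power2_diff sum.distrib sum_subtractf sum_divide_distrib sum_distrib_left power_divide mult_ac)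
    also have "\<dots> = 0" using u1 sr rpos r2 s2pos unfolding \<sigma>_def s2_def by (simp add: power2_eq_square)
    finally have "\<forall>i<p. (u i - a i / r)^2 = 0"
      using sum_nonneg_eq_0_iff[of "{..<p}" "\<lambda>i. (u i - a i / r)^2"] by auto
    then show ?thesis using sr rpos by (auto simp: field_simps)
  qed
  then show "0 \<le> (\<Sum>i<p. u i * a i)" and "\<forall>i<p. a i = (\<Sum>i<p. u i * a i) * u i"
    unfolding \<sigma>_def by auto
qed

definition sym_involution :: "nat \<Rightarrow> (nat \<Rightarrow> nat \<Rightarrow> real) \<Rightarrow> bool" where
  "sym_involution p H \<longleftrightarrow> (\<forall>i<p. \<forall>j<p. H i j = H j i) \<and>
     (\<forall>i<p. \<forall>j<p. (\<Sum>k<p. H i k * H k j) = (if i = j then 1 else 0))"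

lemma sym_involution_orthonormal_cols:
  assumes "sym_involution p H"
  shows "orthonormal_cols p H"
  unfolding orthonormal_cols_def
proof (intro allI impI)
  fix i j assume ij: "i < p" "j < p"
  have sym: "\<forall>i<p. \<forall>j<p. H i j = H j i"
    and inv: "\<forall>i<p. \<forall>j<p. (\<Sum>k<p. H i k * H k j) = (if i = j then 1 else 0)"
    using assms unfolding sym_involution_def by auto
  have "(\<Sum>k<p. H k i * H k j) = (\<Sum>k<p. H i k * H k j)"
    using sym ij by (intro sum.cong) auto
  also have "\<dots> = (if i = j then 1 else 0)"
    using inv ij by blast
  finally show "(\<Sum>k<p. H k i * H k j) = (if i = j then 1 else 0)" .
qed

lemma sum_delta_mult_left:
  fixes p :: nat assumes "i < p" shows "(\<Sum>k<p. (if i = k then 1 else 0) * (f k :: real)) = f i"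
proof -
  have "(\<Sum>k<p. (if i = k then 1 else 0) * f k) = (\<Sum>k<p. if k = i then f k else 0)" by (rule sum.cong) auto
  also have "\<dots> = f i" using assms by (subst sum.delta) auto
  finally show ?thesis .
qed

lemma sum_delta_mult_right:
  fixes p :: nat assumes "j < p" shows "(\<Sum>k<p. (f k :: real) * (if k = j then 1 else 0)) = f j"
proof -
  have "(\<Sum>k<p. f k * (if k = j then 1 else 0)) = (\<Sum>k<p. if k = j then f k else 0)" by (rule sum.cong) auto
  also have "\<dots> = f j" using assms by (subst sum.delta) auto
  finally show ?thesis .
qed

lemma reflection_sym_involution:
  assumes ww: "(\<Sum>i<p. (w i)^2) = ww" "0 < ww"
  shows "sym_involution p (\<lambda>i j. (if i = j then 1 else 0) - 2 * w i * w j / ww)"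
  unfolding sym_involution_def
proof (intro conjI allI impI)
  fix i j assume ij: "i < p" "j < p"
  let ?\<delta> = "\<lambda>i j. if i = j then 1 else (0::real)"
  have "(\<Sum>k<p. (?\<delta> i k - 2 * w i * w k / ww) * (?\<delta> k j - 2 * w k * w j / ww)) =
        (\<Sum>k<p. ?\<delta> i k * ?\<delta> k j) - (\<Sum>k<p. ?\<delta> i k * (2 * w k * w j / ww))
        - (\<Sum>k<p. (2 * w i * w k / ww) * ?\<delta> k j) + (\<Sum>k<p. 4 * w i * w j * (w k)^2 / ww^2)"
    by (simp add: sum.distrib sum_subtractf algebra_simps power2_eq_square)
  also have "(\<Sum>k<p. ?\<delta> i k * ?\<delta> k j) = ?\<delta> i j"
    using sum_delta_mult_left[OF ij(1), of "\<lambda>k. ?\<delta> k j"] by simp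
  also have "(\<Sum>k<p. ?\<delta> i k * (2 * w k * w j / ww)) = 2 * w i * w j / ww"
    by (rule sum_delta_mult_left[OF ij(1)])
  also have "(\<Sum>k<p. (2 * w i * w k / ww) * ?\<delta> k j) = 2 * w i * w j / ww"
    by (rule sum_delta_mult_right[OF ij(2)])
  also have "(\<Sum>k<p. 4 * w i * w j * (w k)^2 / ww^2) = 4 * w i * w j * ww / ww^2"
    unfolding ww(1)[symmetric] by (simp add: sum_distrib_left sum_divide_distrib)
  finally show "(\<Sum>k<p. (?\<delta> i k - 2 * w i * w k / ww) * (?\<delta> k j - 2 * w k * w j / ww)) = ?\<delta> i j"
    using ww(2) by (simp add: power2_eq_square)
qed auto

lemma householder_exists:
  assumes u: "unit_vector p u" and q: "q < p"
  obtains H where "sym_involution p H" "\<forall>i<p. H i q = u i"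
proof -
  define w where "w i = u i - (if i = q then 1 else 0)" for i
  define ww where "ww = (\<Sum>i<p. (w i)^2)"
  have "ww = (\<Sum>i<p. (u i)^2 - 2 * (if i = q then u i else 0) + (if i = q then 1 else 0))"
    unfolding ww_def w_def by (rule sum.cong) (auto simp: power2_diff)
  also have "\<dots> = 2 - 2 * u q"
    using q u unfolding unit_vector_def by (simp add: sum.distrib sum_subtractf sum_distrib_left[symmetric])
  finally have wwe: "ww = 2 - 2 * u q" .
  show ?thesis
  proof (cases "ww = 0")
    case True
    then have "\<forall>i<p. w i = 0"
      unfolding ww_def using sum_nonneg_eq_0_iff[of "{..<p}" "\<lambda>i. (w i)^2"] by auto
    moreover have "sym_involution p (\<lambda>i j. if i = j then 1 else 0)"
      unfolding sym_involution_def by (simp add: sum_delta_mult_left)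
    ultimately show ?thesis by (intro that[of "\<lambda>i j. if i = j then 1 else 0"]) (auto simp: w_def)
  next
    case False
    have wwpos: "0 < ww" using False unfolding ww_def by (simp add: sum_nonneg order_le_neq_trans)
    show ?thesis
    proof (rule that[OF reflection_sym_involution[OF ww_def[symmetric] wwpos]], intro allI impI)
      fix i assume "i < p"
      have "(if i = q then 1 else 0) - 2 * w i * w q / ww = (if i = q then 1 else 0) + w i * (- 2 * w q / ww)"
        by simp
      also have "- 2 * w q / ww = 1" using wwe wwpos by (simp add: w_def field_simps)
      finally show "(if i = q then 1 else 0) - 2 * w i * w q / ww = u i" unfolding w_def by auto
    qed
  qed
qed

lemma orthonormal_cols_mult:
  assumes "orthonormal_cols n H" "orthonormal_cols n Q"
  shows "orthonormal_cols n (\<lambda>i k. \<Sum>r<n. H i r * Q r k)"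
  unfolding orthonormal_cols_def
proof (intro allI impI)
  fix k l assume kl: "k < n" "l < n"
  have "(\<Sum>i<n. (\<Sum>r<n. H i r * Q r k) * (\<Sum>s<n. H i s * Q s l)) =
        (\<Sum>i<n. \<Sum>r<n. \<Sum>s<n. Q r k * Q s l * (H i r * H i s))"
    by (simp only: sum_product) (simp add: mult_ac)
  also have "\<dots> = (\<Sum>r<n. \<Sum>s<n. \<Sum>i<n. Q r k * Q s l * (H i r * H i s))"
    by (subst sum.swap) (intro sum.cong refl sum.swap)
  also have "\<dots> = (\<Sum>r<n. \<Sum>s<n. Q r k * ((if r = s then 1 else 0) * Q s l))"
  proof (intro sum.cong refl)
    fix r s assume "r \<in> {..<n}" "s \<in> {..<n}"
    then have "(\<Sum>i<n. H i r * H i s) = (if r = s then 1 else 0)"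
      using assms(1) unfolding orthonormal_cols_def by auto
    then show "(\<Sum>i<n. Q r k * Q s l * (H i r * H i s)) = Q r k * ((if r = s then 1 else 0) * Q s l)"
      by (simp add: sum_distrib_left[symmetric])
  qed
  also have "\<dots> = (\<Sum>r<n. Q r k * Q r l)"
    by (intro sum.cong refl) (simp add: sum_distrib_left[symmetric] sum_delta_mult_left)
  also have "\<dots> = (if k = l then 1 else 0)" using assms(2) kl unfolding orthonormal_cols_def by auto
  finally show "(\<Sum>i<n. (\<Sum>r<n. H i r * Q r k) * (\<Sum>s<n. H i s * Q s l)) = (if k = l then 1 else 0)" .
qed

lemma svd_block_extend:
  assumes svd: "is_svd m B U V \<sigma>" and \<sigma>0: "0 \<le> \<sigma>0"
    and col: "\<forall>i<Suc m. B i m = (if i = m then \<sigma>0 else 0)"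
    and row: "\<forall>j<Suc m. B m j = (if j = m then \<sigma>0 else 0)"
  shows "is_svd (Suc m) B (\<lambda>p k. if k < m then (if p < m then U p k else 0) else (if p = m then 1 else 0))
      (\<lambda>p k. if k < m then (if p < m then V p k else 0) else (if p = m then 1 else 0))
      (\<lambda>k. if k < m then \<sigma> k else \<sigma>0)"
proof -
  have extend: "orthonormal_cols (Suc m) (\<lambda>p k. if k < m then (if p < m then U' p k else 0) else (if p = m then 1 else 0))"
    if "orthonormal_cols m U'" for U'
    unfolding orthonormal_cols_def
  proof (intro allI impI)
    fix i j assume ij: "i < Suc m" "j < Suc m"
    let ?U = "\<lambda>p k. if k < m then (if p < m then U' p k else 0) else (if p = m then 1 else (0::real))"
    have "(\<Sum>k<Suc m. ?U k i * ?U k j) = (\<Sum>k<m. ?U k i * ?U k j) + ?U m i * ?U m j"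
      by simp
    moreover have "(\<Sum>k<m. ?U k i * ?U k j) = (if i < m \<and> j < m then (\<Sum>k<m. U' k i * U' k j) else 0)"
      by (auto intro: sum.neutral)
    ultimately show "(\<Sum>k<Suc m. ?U k i * ?U k j) = (if i = j then 1 else 0)"
      using that ij unfolding orthonormal_cols_def by (auto simp: less_Suc_eq)
  qed
  show ?thesis
    unfolding is_svd_def
  proof (intro conjI allI impI extend)
    show "orthonormal_cols m U" "orthonormal_cols m V" using svd unfolding is_svd_def by auto
    show "0 \<le> (if k < m then \<sigma> k else \<sigma>0)" if "k < Suc m" for k using svd \<sigma>0 unfolding is_svd_def by auto
    fix p q assume pq: "p < Suc m" "q < Suc m"
    have "p < m \<and> q < m \<Longrightarrow> B p q = (\<Sum>k<m. U p k * \<sigma> k * V q k)" using svd unfolding is_svd_def by auto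
    moreover have "p = m \<or> q = m \<Longrightarrow> B p q = (if p = m \<and> q = m then \<sigma>0 else 0)"
      using col row pq by auto
    ultimately show "B p q = (\<Sum>k<Suc m.
        (if k < m then (if p < m then U p k else 0) else (if p = m then 1 else 0)) *
        (if k < m then \<sigma> k else \<sigma>0) *
        (if k < m then (if q < m then V q k else 0) else (if q = m then 1 else 0)))"
      using pq by (auto simp: less_Suc_eq intro!: sum.cong)
  qed
qed

lemma svd_conj_involutions:
  assumes H1: "sym_involution n H1" and H2: "sym_involution n H2" and svd: "is_svd n B U V \<sigma>"
    and B: "\<forall>i<n. \<forall>j<n. B i j = (\<Sum>p<n. \<Sum>q<n. H1 i p * M p q * H2 q j)"
  shows "is_svd n M (\<lambda>i k. \<Sum>r<n. H1 i r * U r k) (\<lambda>i k. \<Sum>r<n. H2 i r * V r k) \<sigma>"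
  unfolding is_svd_def
proof (intro conjI allI impI)
  show "orthonormal_cols n (\<lambda>i k. \<Sum>r<n. H1 i r * U r k)" "orthonormal_cols n (\<lambda>i k. \<Sum>r<n. H2 i r * V r k)"
    using svd H1 H2 unfolding is_svd_def by (auto intro: orthonormal_cols_mult sym_involution_orthonormal_cols)
  show "0 \<le> \<sigma> k" if "k < n" for k using svd that unfolding is_svd_def by auto
  fix i j assume ij: "i < n" "j < n"
  have H1i: "\<forall>p<n. (\<Sum>r<n. H1 i r * H1 r p) = (if i = p then 1 else 0)"
    and H2j: "\<forall>q<n. (\<Sum>s<n. H2 q s * H2 s j) = (if q = j then 1 else 0)"
    using H1 H2 ij unfolding sym_involution_def by blast+
  have "M i j = (\<Sum>p<n. \<Sum>q<n. (if i = p then 1 else 0) * M p q * (if q = j then 1 else 0))"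
    using ij by (simp add: sum_delta_mult_left sum_delta_mult_right mult.assoc sum_distrib_left[symmetric])
  also have "\<dots> = (\<Sum>p<n. \<Sum>q<n. \<Sum>r<n. \<Sum>s<n. H1 i r * H1 r p * M p q * (H2 q s * H2 s j))"
  proof (intro sum.cong refl)
    fix p q assume "p \<in> {..<n}" "q \<in> {..<n}"
    then have "(if i = p then 1 else 0) * M p q * (if q = j then 1 else 0) =
        (\<Sum>r<n. H1 i r * H1 r p) * M p q * (\<Sum>s<n. H2 q s * H2 s j)"
      using H1i H2j by simp
    also have "\<dots> = (\<Sum>r<n. \<Sum>s<n. H1 i r * H1 r p * M p q * (H2 q s * H2 s j))"
      by (simp add: sum_distrib_left sum_distrib_right mult_ac)
    finally show "(if i = p then 1 else 0) * M p q * (if q = j then 1 else 0) =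
        (\<Sum>r<n. \<Sum>s<n. H1 i r * H1 r p * M p q * (H2 q s * H2 s j))" .
  qed
  also have "\<dots> = (\<Sum>r<n. \<Sum>s<n. \<Sum>p<n. \<Sum>q<n. H1 i r * H1 r p * M p q * (H2 q s * H2 s j))"
    by (subst sum.swap, subst (2) sum.swap, rule sum.cong[OF refl], subst sum.swap,
        rule sum.cong[OF refl], rule sum.swap)
  also have "\<dots> = (\<Sum>r<n. \<Sum>s<n. H1 i r * B r s * H2 j s)"
    using B H2 ij unfolding sym_involution_def
    by (intro sum.cong refl) (simp add: sum_distrib_left sum_distrib_right mult_ac)
  also have "\<dots> = (\<Sum>r<n. \<Sum>s<n. \<Sum>k<n. H1 i r * U r k * \<sigma> k * (H2 j s * V s k))"
    using svd unfolding is_svd_def by (intro sum.cong refl) (simp add: sum_distrib_left sum_distrib_right mult_ac)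
  also have "\<dots> = (\<Sum>k<n. \<Sum>r<n. \<Sum>s<n. H1 i r * U r k * \<sigma> k * (H2 j s * V s k))"
    by (subst sum.swap) (intro sum.cong refl sum.swap)
  also have "\<dots> = (\<Sum>k<n. (\<Sum>r<n. H1 i r * U r k) * \<sigma> k * (\<Sum>s<n. H2 j s * V s k))"
    by (simp add: sum_distrib_left sum_distrib_right mult_ac)
  finally show "M i j = (\<Sum>k<n. (\<Sum>r<n. H1 i r * U r k) * \<sigma> k * (\<Sum>r<n. H2 j r * V r k))" .
qed

lemma householder_deflates:
  assumes H1: "sym_involution p H1" and H2: "sym_involution p H2" and mp: "m < p"
    and H1u: "\<forall>i<p. H1 i m = u i" and H2v: "\<forall>i<p. H2 i m = v i"
    and Mv: "\<forall>i<p. (\<Sum>j<p. M i j * v j) = \<sigma>0 * u i" and uM: "\<forall>j<p. (\<Sum>i<p. u i * M i j) = \<sigma>0 * v j"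
  shows "\<forall>i<p. (\<Sum>r<p. \<Sum>s<p. H1 i r * M r s * H2 s m) = (if i = m then \<sigma>0 else 0)"
    and "\<forall>j<p. (\<Sum>r<p. \<Sum>s<p. H1 m r * M r s * H2 s j) = (if j = m then \<sigma>0 else 0)"
proof -
  have sym1: "\<forall>i<p. \<forall>j<p. H1 i j = H1 j i" and inv1: "\<forall>i<p. \<forall>j<p. (\<Sum>k<p. H1 i k * H1 k j) = (if i = j then 1 else 0)"
    and sym2: "\<forall>i<p. \<forall>j<p. H2 i j = H2 j i" and inv2: "\<forall>i<p. \<forall>j<p. (\<Sum>k<p. H2 i k * H2 k j) = (if i = j then 1 else 0)"
    using H1 H2 unfolding sym_involution_def by blast+
  show "\<forall>i<p. (\<Sum>r<p. \<Sum>s<p. H1 i r * M r s * H2 s m) = (if i = m then \<sigma>0 else 0)"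
  proof (intro allI impI)
    fix i assume i: "i < p"
    have "(\<Sum>r<p. \<Sum>s<p. H1 i r * M r s * H2 s m) = (\<Sum>r<p. \<Sum>s<p. H1 i r * M r s * v s)"
      using H2v by (intro sum.cong refl) simp
    also have "\<dots> = (\<Sum>r<p. H1 i r * (\<Sum>s<p. M r s * v s))"
      by (simp add: sum_distrib_left mult.assoc)
    also have "\<dots> = (\<Sum>r<p. H1 i r * (\<sigma>0 * H1 r m))"
      using Mv H1u by (intro sum.cong refl) simp
    also have "\<dots> = \<sigma>0 * (\<Sum>r<p. H1 i r * H1 r m)"
      by (simp add: sum_distrib_left mult_ac)
    finally show "(\<Sum>r<p. \<Sum>s<p. H1 i r * M r s * H2 s m) = (if i = m then \<sigma>0 else 0)"
      using inv1 i mp by simp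
  qed
  show "\<forall>j<p. (\<Sum>r<p. \<Sum>s<p. H1 m r * M r s * H2 s j) = (if j = m then \<sigma>0 else 0)"
  proof (intro allI impI)
    fix j assume j: "j < p"
    have "(\<Sum>r<p. \<Sum>s<p. H1 m r * M r s * H2 s j) = (\<Sum>s<p. (\<Sum>r<p. H1 m r * M r s) * H2 s j)"
      by (subst sum.swap) (simp add: sum_distrib_right)
    also have "\<dots> = (\<Sum>s<p. (\<Sum>r<p. u r * M r s) * H2 s j)"
      using sym1 H1u mp by (intro sum.cong refl) (auto intro!: sum.cong)
    also have "\<dots> = (\<Sum>s<p. \<sigma>0 * H2 m s * H2 s j)"
      using uM sym2 H2v mp by (intro sum.cong refl) auto
    also have "\<dots> = \<sigma>0 * (\<Sum>s<p. H2 m s * H2 s j)"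
      by (simp add: sum_distrib_left mult_ac)
    finally show "(\<Sum>r<p. \<Sum>s<p. H1 m r * M r s * H2 s j) = (if j = m then \<sigma>0 else 0)"
      using inv2 j mp by simp
  qed
qed

text \<open>Inductive step: reflections sending the last basis vectors to a maximising pair (u, v) of the
  bilinear form of M reduce M to a block matrix with corner \<sigma>0 = u^T M v.\<close>

lemma svd_deflation_step:
  assumes IH: "\<And>B. \<exists>U V \<sigma>. is_svd m B U V \<sigma>"
  shows "\<exists>U V \<sigma>. is_svd (Suc m) M U V \<sigma>"
proof -
  define p where "p = Suc m"
  have mp: "m < p" "0 < p" unfolding p_def by auto
  obtain u v where u: "unit_vector p u" and v: "unit_vector p v"
    and mx: "\<And>u' v'. unit_vector p u' \<Longrightarrow> unit_vector p v' \<Longrightarrow>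
       (\<Sum>i<p. \<Sum>j<p. u' i * M i j * v' j) \<le> (\<Sum>i<p. \<Sum>j<p. u i * M i j * v j)"
    using bilinear_form_attains_max[OF mp(2), where N = M] by blast
  define \<sigma>0 where "\<sigma>0 = (\<Sum>i<p. \<Sum>j<p. u i * M i j * v j)"
  have rows: "(\<Sum>i<p. x i * (\<Sum>j<p. M i j * y j)) = (\<Sum>i<p. \<Sum>j<p. x i * M i j * y j)" for x y
    by (simp add: sum_distrib_left mult.assoc)
  have cols: "(\<Sum>j<p. y j * (\<Sum>i<p. x i * M i j)) = (\<Sum>i<p. \<Sum>j<p. x i * M i j * y j)" for x y
    by (subst sum.swap) (simp add: sum_distrib_left mult_ac)
  have \<sigma>0: "0 \<le> \<sigma>0" and Mv: "\<forall>i<p. (\<Sum>j<p. M i j * v j) = \<sigma>0 * u i"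
    using maximiser_aligned[OF u, of "\<lambda>i. \<Sum>j<p. M i j * v j"] mx[OF _ v] unfolding rows \<sigma>0_def by blast+
  have uM: "\<forall>j<p. (\<Sum>i<p. u i * M i j) = \<sigma>0 * v j"
    using maximiser_aligned[OF v, of "\<lambda>j. \<Sum>i<p. u i * M i j"] mx[OF u] unfolding cols \<sigma>0_def by blast
  obtain H1 where H1: "sym_involution p H1" and H1u: "\<forall>i<p. H1 i m = u i"
    using householder_exists[OF u mp(1)] by blast
  obtain H2 where H2: "sym_involution p H2" and H2v: "\<forall>i<p. H2 i m = v i"
    using householder_exists[OF v mp(1)] by blast
  define B where "B i j = (\<Sum>r<p. \<Sum>s<p. H1 i r * M r s * H2 s j)" for i j
  have col: "\<forall>i<p. B i m = (if i = m then \<sigma>0 else 0)" and row: "\<forall>j<p. B m j = (if j = m then \<sigma>0 else 0)"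
    using householder_deflates[OF H1 H2 mp(1) H1u H2v Mv uM] unfolding B_def by auto
  obtain U V \<sigma> where "is_svd m B U V \<sigma>" using IH by blast
  from svd_block_extend[OF this \<sigma>0] col row
  obtain U' V' \<sigma>' where "is_svd p B U' V' \<sigma>'" unfolding p_def by blast
  from svd_conj_involutions[OF H1 H2 this] show ?thesis
    unfolding p_def B_def by blast
qed

lemma svd_exists: "\<exists>U V \<sigma>. is_svd n M U V \<sigma>"
proof (induction n arbitrary: M)
  case 0
  show ?case by (simp add: is_svd_def orthonormal_cols_def)
next
  case (Suc m)
  then show ?case by (rule svd_deflation_step)
qed

lemma trace_norm_nonneg: "0 \<le> trace_norm n N"
proof -
  obtain U V \<sigma> where s: "is_svd n N U V \<sigma>" using svd_exists by blast
  then have "0 \<le> (\<Sum>k<n. \<sigma> k)" unfolding is_svd_def by (auto intro: sum_nonneg)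
  then show ?thesis unfolding trace_norm_svd[OF s] .
qed

lemma sum_if_mem_subset:
  fixes h :: "nat \<Rightarrow> real"
  assumes "finite S" "P \<subseteq> S"
  shows "(\<Sum>i\<in>S. if i \<in> P then h i else 0) = (\<Sum>i\<in>P. h i)"
  using sum.inter_restrict[OF assms(1), of h P] assms(2) by (simp add: Int_absorb1)

lemma sum_lessThan_if_rect:
  fixes h :: "nat \<Rightarrow> nat \<Rightarrow> real"
  assumes "P \<subseteq> {..<n}" "Q \<subseteq> {..<n}"
  shows "(\<Sum>i<n. \<Sum>j<n. if i \<in> P \<and> j \<in> Q then h i j else 0) = (\<Sum>i\<in>P. \<Sum>j\<in>Q. h i j)"
proof -
  have "(\<Sum>i<n. \<Sum>j<n. if i \<in> P \<and> j \<in> Q then h i j else 0) =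
        (\<Sum>i<n. if i \<in> P then (\<Sum>j<n. if j \<in> Q then h i j else 0) else 0)"
    by (intro sum.cong refl) auto
  also have "\<dots> = (\<Sum>i<n. if i \<in> P then (\<Sum>j\<in>Q. h i j) else 0)"
    by (intro sum.cong refl) (simp add: sum_if_mem_subset[OF _ assms(2)])
  also have "\<dots> = (\<Sum>i\<in>P. \<Sum>j\<in>Q. h i j)" using sum_if_mem_subset[OF _ assms(1)] by simp
  finally show ?thesis .
qed

lemma trace_norm_indicator_rect_le:
  assumes P: "P \<subseteq> {..<n}" and Q: "Q \<subseteq> {..<n}"
  shows "trace_norm n (\<lambda>i j. if i \<in> P \<and> j \<in> Q then 1 else 0) \<le> sqrt (real (card P)) * sqrt (real (card Q))"
proof -
  define a where "a i = (if i \<in> P then 1 else (0::real))" for i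
  define b where "b j = (if j \<in> Q then 1 else (0::real))" for j
  have rect: "(\<lambda>i j. if i \<in> P \<and> j \<in> Q then 1 else 0) = (\<lambda>i j. a i * b j)"
    unfolding a_def b_def by auto
  have "(a i)^2 = (if i \<in> P then 1 else 0)" "(b i)^2 = (if i \<in> Q then 1 else 0)" for i
    unfolding a_def b_def by simp_all
  then have card: "(\<Sum>i<n. (a i)^2) = real (card P)" "(\<Sum>j<n. (b j)^2) = real (card Q)"
    using sum_if_mem_subset[OF _ P, of "\<lambda>_. 1"] sum_if_mem_subset[OF _ Q, of "\<lambda>_. 1"] by simp_all
  obtain U V \<sigma> where s: "is_svd n (\<lambda>i j. a i * b j) U V \<sigma>" using svd_exists by blast
  have "trace_norm n (\<lambda>i j. a i * b j) = (\<Sum>k<n. \<Sum>i<n. \<Sum>j<n. U i k * (a i * b j) * V j k)"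
    using trace_norm_svd[OF s] svd_frame_pairing_eq[OF s] by simp
  also have "\<dots> = (\<Sum>k<n. (\<Sum>i<n. U i k * a i) * (\<Sum>j<n. V j k * b j))"
    by (simp add: sum_product mult_ac)
  also have "\<dots> \<le> sqrt (\<Sum>k<n. (\<Sum>i<n. U i k * a i)^2) * sqrt (\<Sum>k<n. (\<Sum>j<n. V j k * b j)^2)"
    by (rule sum_mult_le_sqrt)
  also have "\<dots> \<le> sqrt (\<Sum>i<n. (a i)^2) * sqrt (\<Sum>j<n. (b j)^2)"
    using s unfolding is_svd_def
    by (intro mult_mono real_sqrt_le_mono bessel_inequality) (auto intro: sum_nonneg)
  finally show ?thesis unfolding rect card .
qed

section \<open>Operator norm and trace duality\<close>

lemma op_norm_on_bdd_above:
  fixes S :: "nat set"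
  assumes "finite S"
  shows "bdd_above {sqrt (\<Sum>i\<in>S. (\<Sum>j\<in>S. Y i j * x j)^2) | x. (\<Sum>j\<in>S. (x j)^2) \<le> 1}"
proof (rule bdd_aboveI, clarify)
  fix x :: "nat \<Rightarrow> real" assume x: "(\<Sum>j\<in>S. (x j)^2) \<le> 1"
  have "(\<Sum>j\<in>S. Y i j * x j)^2 \<le> (\<Sum>j\<in>S. (Y i j)^2)" for i
  proof -
    have "(\<Sum>j\<in>S. Y i j * x j)^2 \<le> (\<Sum>j\<in>S. (Y i j)^2) * (\<Sum>j\<in>S. (x j)^2)" by (rule Cauchy_Schwarz_ineq_sum)
    also have "\<dots> \<le> (\<Sum>j\<in>S. (Y i j)^2) * 1" using x by (intro mult_left_mono) (auto intro: sum_nonneg)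
    finally show ?thesis by simp
  qed
  then show "sqrt (\<Sum>i\<in>S. (\<Sum>j\<in>S. Y i j * x j)^2) \<le> sqrt (\<Sum>i\<in>S. (\<Sum>j\<in>S. (Y i j)^2))"
    by (simp add: sum_mono)
qed

lemma op_norm_on_nonneg:
  fixes S :: "nat set"
  assumes "finite S"
  shows "0 \<le> op_norm_on S Y"
proof -
  have "sqrt (\<Sum>i\<in>S. (\<Sum>j\<in>S. Y i j * 0)^2) \<le> op_norm_on S Y"
    unfolding op_norm_on_def
    by (rule cSup_upper[OF _ op_norm_on_bdd_above[OF assms]], rule CollectI, rule exI[of _ "\<lambda>_. 0"]) simp
  then show ?thesis by simp
qed

lemma bilinear_le_op_norm_on:
  fixes S :: "nat set"
  assumes "finite S"
  shows "\<bar>\<Sum>i\<in>S. \<Sum>j\<in>S. a i * Y i j * b j\<bar> \<le> op_norm_on S Y * sqrt (\<Sum>i\<in>S. (a i)^2) * sqrt (\<Sum>j\<in>S. (b j)^2)"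
proof (cases "(\<Sum>j\<in>S. (b j)^2) = 0")
  case True
  then have "\<forall>j\<in>S. b j = 0" using sum_nonneg_eq_0_iff[of S "\<lambda>j. (b j)^2"] assms by auto
  then show ?thesis using True by simp
next
  case False
  define \<beta> where "\<beta> = sqrt (\<Sum>j\<in>S. (b j)^2)"
  have \<beta>: "0 < \<beta>" "\<beta>^2 = (\<Sum>j\<in>S. (b j)^2)"
    using False unfolding \<beta>_def by (simp_all add: sum_nonneg order_le_neq_trans)
  define c where "c i = (\<Sum>j\<in>S. Y i j * b j)" for i
  have "(\<Sum>j\<in>S. (b j / \<beta>)^2) = 1"
    using \<beta> False by (simp add: power_divide sum_divide_distrib[symmetric])
  then have "sqrt (\<Sum>i\<in>S. (\<Sum>j\<in>S. Y i j * (b j / \<beta>))^2) \<le> op_norm_on S Y"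
    unfolding op_norm_on_def by (intro cSup_upper op_norm_on_bdd_above assms) fastforce
  moreover have "sqrt (\<Sum>i\<in>S. (\<Sum>j\<in>S. Y i j * (b j / \<beta>))^2) = sqrt (\<Sum>i\<in>S. (c i)^2) / \<beta>"
  proof -
    have "(\<Sum>j\<in>S. Y i j * (b j / \<beta>)) = c i / \<beta>" for i
      unfolding c_def by (simp add: sum_divide_distrib)
    then have "(\<Sum>i\<in>S. (\<Sum>j\<in>S. Y i j * (b j / \<beta>))^2) = (\<Sum>i\<in>S. (c i)^2) / \<beta>^2"
      by (simp add: power_divide sum_divide_distrib)
    then show ?thesis using \<beta>(1) by (simp add: real_sqrt_divide)
  qed
  ultimately have "sqrt (\<Sum>i\<in>S. (c i)^2) / \<beta> \<le> op_norm_on S Y" by simp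
  then have cb: "sqrt (\<Sum>i\<in>S. (c i)^2) \<le> op_norm_on S Y * \<beta>" using \<beta> by (simp add: field_simps)
  have "\<bar>\<Sum>i\<in>S. \<Sum>j\<in>S. a i * Y i j * b j\<bar> = \<bar>\<Sum>i\<in>S. a i * c i\<bar>"
    unfolding c_def by (simp add: sum_distrib_left mult.assoc)
  also have "\<dots> \<le> sqrt (\<Sum>i\<in>S. (a i)^2) * sqrt (\<Sum>i\<in>S. (c i)^2)" by (rule abs_sum_mult_le_sqrt)
  also have "\<dots> \<le> sqrt (\<Sum>i\<in>S. (a i)^2) * (op_norm_on S Y * \<beta>)" by (intro mult_left_mono cb) (simp add: sum_nonneg)
  finally show ?thesis unfolding \<beta>_def by (simp add: mult_ac)
qed

lemma masked_column_sum_sq_le: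
  assumes W: "orthonormal_cols n W" and k: "k < n" and S: "S \<subseteq> {..<n}" and R: "R \<subseteq> S"
    and h: "\<forall>i\<in>R. \<bar>h i\<bar> \<le> 1"
  shows "(\<Sum>i\<in>S. (if i \<in> R then h i * W i k else 0)^2) \<le> 1"
proof -
  have "(\<Sum>i\<in>S. (if i \<in> R then h i * W i k else 0)^2) \<le> (\<Sum>i\<in>S. (W i k)^2)"
    using h by (intro sum_mono) (auto simp: power_mult_distrib abs_square_le_1 mult_left_le_one_le)
  also have "\<dots> \<le> (\<Sum>i<n. (W i k)^2)" using S by (intro sum_mono2) auto
  also have "\<dots> = 1" using orthonormal_cols_norm[OF W k] .
  finally show ?thesis .
qed

text \<open>Trace duality: expanding N in its SVD, the pairing becomes a \<sigma>-weighted sum of bilinear forms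
  of Y on (sub-)unit vectors.\<close>

lemma abs_pairing_le_op_norm_trace_norm:
  assumes S: "S \<subseteq> {..<n}" and P: "P \<subseteq> S" and Q: "Q \<subseteq> S"
    and f: "\<forall>i\<in>P. \<bar>f i\<bar> \<le> 1" and g: "\<forall>j\<in>Q. \<bar>g j\<bar> \<le> 1"
  shows "\<bar>\<Sum>i\<in>P. \<Sum>j\<in>Q. f i * Y i j * g j * N i j\<bar> \<le> op_norm_on S Y * trace_norm n N"
proof -
  have fS: "finite S" using S finite_subset by blast
  obtain U V \<sigma> where s: "is_svd n N U V \<sigma>" using svd_exists by blast
  then have oUV: "orthonormal_cols n U" "orthonormal_cols n V" unfolding is_svd_def by auto
  define a where "a k i = (if i \<in> P then f i * U i k else 0)" for k i
  define b where "b k j = (if j \<in> Q then g j * V j k else 0)" for k j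
  define X where "X k = (\<Sum>i\<in>S. \<Sum>j\<in>S. a k i * Y i j * b k j)" for k
  have "(\<Sum>i\<in>P. \<Sum>j\<in>Q. f i * Y i j * g j * N i j) = (\<Sum>i\<in>P. \<Sum>j\<in>Q. \<Sum>k<n. \<sigma> k * (f i * U i k * Y i j * (g j * V j k)))"
  proof (intro sum.cong refl)
    fix i j assume "i \<in> P" "j \<in> Q"
    then have "i < n" "j < n" using P Q S by auto
    then have "N i j = (\<Sum>k<n. U i k * \<sigma> k * V j k)" using s unfolding is_svd_def by blast
    then show "f i * Y i j * g j * N i j = (\<Sum>k<n. \<sigma> k * (f i * U i k * Y i j * (g j * V j k)))"
      by (simp add: sum_distrib_left mult_ac)
  qed
  also have "\<dots> = (\<Sum>k<n. \<Sum>i\<in>P. \<Sum>j\<in>Q. \<sigma> k * (f i * U i k * Y i j * (g j * V j k)))"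
    by (subst sum.swap) (intro sum.cong refl sum.swap)
  also have "\<dots> = (\<Sum>k<n. \<sigma> k * X k)"
  proof (rule sum.cong[OF refl])
    fix k
    have "X k = (\<Sum>i\<in>S. if i \<in> P then (\<Sum>j\<in>S. if j \<in> Q then f i * U i k * Y i j * (g j * V j k) else 0) else 0)"
      unfolding X_def a_def b_def by (intro sum.cong refl) (auto intro: sum.cong)
    also have "\<dots> = (\<Sum>i\<in>P. \<Sum>j\<in>Q. f i * U i k * Y i j * (g j * V j k))"
      using sum_if_mem_subset[OF fS P] sum_if_mem_subset[OF fS Q] by simp
    finally show "(\<Sum>i\<in>P. \<Sum>j\<in>Q. \<sigma> k * (f i * U i k * Y i j * (g j * V j k))) = \<sigma> k * X k"
      by (simp add: sum_distrib_left)
  qed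
  finally have eq: "(\<Sum>i\<in>P. \<Sum>j\<in>Q. f i * Y i j * g j * N i j) = (\<Sum>k<n. \<sigma> k * X k)" .
  have Xk: "\<bar>X k\<bar> \<le> op_norm_on S Y" if k: "k < n" for k
  proof -
    have "\<bar>X k\<bar> \<le> op_norm_on S Y * sqrt (\<Sum>i\<in>S. (a k i)^2) * sqrt (\<Sum>j\<in>S. (b k j)^2)"
      unfolding X_def by (rule bilinear_le_op_norm_on[OF fS])
    also have "\<dots> \<le> op_norm_on S Y * 1 * 1"
      using masked_column_sum_sq_le[OF oUV(1) k S P f] masked_column_sum_sq_le[OF oUV(2) k S Q g]
        s op_norm_on_nonneg[OF fS]
      unfolding a_def b_def is_svd_def by (intro mult_mono) (auto intro: sum_nonneg)
    finally show ?thesis by simp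
  qed
  have "\<bar>\<Sum>k<n. \<sigma> k * X k\<bar> \<le> (\<Sum>k<n. \<sigma> k * op_norm_on S Y)"
  proof (rule order_trans[OF sum_abs sum_mono])
    fix k assume "k \<in> {..<n}"
    then have "0 \<le> \<sigma> k" "\<bar>X k\<bar> \<le> op_norm_on S Y" using s Xk unfolding is_svd_def by auto
    then show "\<bar>\<sigma> k * X k\<bar> \<le> \<sigma> k * op_norm_on S Y" by (simp add: abs_mult mult_left_mono)
  qed
  also have "\<dots> = op_norm_on S Y * trace_norm n N"
    unfolding trace_norm_svd[OF s] by (simp add: sum_distrib_left mult.commute)
  finally show ?thesis unfolding eq .
qed

section \<open>One round of boosting\<close>

lemma pseudorect_indicator_rect:
  assumes P: "P \<subseteq> {..<n}" and Q: "Q \<subseteq> {..<n}"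
    and card: "real (card P) \<le> \<theta> * real n" "real (card Q) \<le> \<theta> * real n"
  shows "pseudorect n \<theta> (\<lambda>i j. if i \<in> P \<and> j \<in> Q then 1 else 0)"
  unfolding pseudorect_def
proof (intro conjI allI impI)
  have "(\<Sum>i<n. \<Sum>j<n. \<bar>if i \<in> P \<and> j \<in> Q then 1 else 0\<bar>) = (\<Sum>i<n. \<Sum>j<n. if i \<in> P \<and> j \<in> Q then 1 else (0::real))"
    by (intro sum.cong refl) auto
  also have "\<dots> = real (card P) * real (card Q)" using sum_lessThan_if_rect[OF P Q, of "\<lambda>_ _. 1"] by simp
  also have "\<dots> \<le> (\<theta> * real n) * (\<theta> * real n)" using card by (intro mult_mono) auto
  finally show "(\<Sum>i<n. \<Sum>j<n. \<bar>if i \<in> P \<and> j \<in> Q then 1 else 0\<bar>) \<le> \<theta>^2 * (real n)^2"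
    by (simp add: power2_eq_square mult_ac)
  have "sqrt (real (card P)) * sqrt (real (card Q)) \<le> sqrt (\<theta> * real n) * sqrt (\<theta> * real n)"
    using card by (intro mult_mono) auto
  also have "\<dots> = \<theta> * real n" using card(1) by simp
  finally show "trace_norm n (\<lambda>i j. if i \<in> P \<and> j \<in> Q then 1 else 0) \<le> \<theta> * real n"
    using trace_norm_indicator_rect_le[OF P Q] by linarith
qed auto

lemma row_selector_indicator:
  assumes R: "R \<subseteq> B" and B: "B \<subseteq> {..<n}" and card: "real (card B) \<le> \<theta> * real n"
    and K: "1 \<le> K" and \<theta>: "0 \<le> \<theta>"
  shows "row_selector n \<theta> (K * \<theta>) (\<lambda>i j. (if i \<in> R then 1 else 0) - (if i \<in> R \<and> j \<in> B then 1 else 0))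
    (\<lambda>i. if i \<in> R then 1 else 0)"
  unfolding row_selector_def
proof (intro conjI allI impI exI)
  have card_R: "real (card R) \<le> real (card B)" using card_mono[OF finite_subset[OF B] R] by simp
  have "(\<Sum>i<n. if i \<in> R then 1 else 0) = real (card R)"
    using sum_if_mem_subset[OF _ order_trans[OF R B], of "\<lambda>_. 1"] by simp
  then show "(\<Sum>i<n. if i \<in> R then 1 else 0) \<le> \<theta> * real n" using card_R card by simp
  have "sqrt (\<theta> * (K * \<theta>)) = sqrt K * \<theta>" using \<theta> K by (simp add: real_sqrt_mult mult_ac)
  moreover have "\<theta> \<le> sqrt K * \<theta>" using mult_right_mono[of 1 "sqrt K" \<theta>] K \<theta> by simp
  ultimately have "\<theta> * real n \<le> sqrt (\<theta> * (K * \<theta>)) * real n" by (simp add: mult_right_mono)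
  then show "pseudorect n (sqrt (\<theta> * (K * \<theta>))) (\<lambda>i j. if i \<in> R \<and> j \<in> B then 1 else 0)"
    using card_R card order_trans[OF R B] B by (intro pseudorect_indicator_rect) auto
qed auto

lemma sum_rect_weight_split:
  assumes P: "P \<subseteq> {..<n}" and Q: "Q \<subseteq> {..<n}" and W: "\<forall>i<n. \<forall>j<n. W i j = 1 - w i - w j + N i j"
  shows "(\<Sum>i\<in>P. \<Sum>j\<in>Q. X i j * W i j) = (\<Sum>i\<in>P. \<Sum>j\<in>Q. (1 - w i) * X i j * 1)
    - (\<Sum>i\<in>P. \<Sum>j\<in>Q. 1 * X i j * w j) + (\<Sum>i\<in>P. \<Sum>j\<in>Q. X i j * (N i j :: real))"
proof -
  have "(\<Sum>i\<in>P. \<Sum>j\<in>Q. X i j * W i j) =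
      (\<Sum>i\<in>P. \<Sum>j\<in>Q. (1 - w i) * X i j * 1 - 1 * X i j * w j + X i j * N i j)"
  proof (intro sum.cong refl)
    fix i j assume "i \<in> P" "j \<in> Q"
    then have Wij: "W i j = 1 - w i - w j + N i j" using P Q W by blast
    show "X i j * W i j = (1 - w i) * X i j * 1 - 1 * X i j * w j + X i j * N i j"
      unfolding Wij by (simp add: algebra_simps)
  qed
  then show ?thesis by (simp add: sum.distrib sum_subtractf)
qed

lemma agreements_add_disagreements:
  "real (agreements n l l') + real (card {i. i < n \<and> l i \<noteq> l' i}) = real n"
proof -
  have "{i. i < n \<and> l i = l' i} \<union> {i. i < n \<and> l i \<noteq> l' i} = {..<n}"
    "{i. i < n \<and> l i = l' i} \<inter> {i. i < n \<and> l i \<noteq> l' i} = {}" by auto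
  then show ?thesis unfolding agreements_def
    using card_Un_disjoint[of "{i. i < n \<and> l i = l' i}" "{i. i < n \<and> l i \<noteq> l' i}"]
    by (simp flip: of_nat_add)
qed

lemma le_40_pow_rounds:
  assumes "0 < n"
  shows "real n \<le> 40 ^ nat \<lceil>10 * ln (real n)\<rceil>"
proof -
  let ?T = "nat \<lceil>10 * ln (real n)\<rceil>"
  have l0: "0 \<le> ln (real n)" using assms by simp
  then have "ln (real n) \<le> of_int \<lceil>10 * ln (real n)\<rceil>"
    using le_of_int_ceiling[of "10 * ln (real n)"] by linarith
  also have "\<dots> = real ?T" using l0 by simp
  finally have "ln (real n) \<le> real ?T" .
  then have "real n \<le> exp (real ?T)" using assms by (metis exp_le_cancel_iff exp_ln of_nat_0_less_iff)
  also have "\<dots> = exp 1 ^ ?T" by (simp add: exp_of_nat_mult[symmetric])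
  also have "\<dots> \<le> 40 ^ ?T" using exp_le by (intro power_mono) auto
  finally show ?thesis .
qed

locale boosting_setting =
  fixes n :: nat and A F Y Z :: "nat \<Rightarrow> nat \<Rightarrow> real" and \<zeta> d K \<gamma> :: real
    and S :: "nat set" and lt :: "nat \<Rightarrow> real"
  assumes n_pos: "0 < n" and \<zeta>_pos: "0 < \<zeta>" and \<zeta>_lt_1: "\<zeta> < 1" and d_pos: "0 < d" and K_ge: "K \<ge> 10^4"
    and lt_labelling: "is_labelling n lt"
    and S_sub: "S \<subseteq> {..<n}" and S_card: "real (card S) \<ge> (1 - \<gamma>) * real n" and \<gamma>_le: "\<gamma> \<le> 0.1 * \<zeta>"
    and F_sign: "\<forall>i\<in>S. \<forall>j\<in>S. F i j * (lt i * lt j) \<ge> 0"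
    and YZ_split: "\<forall>i\<in>S. \<forall>j\<in>S. A i j - F i j = Y i j + Z i j"
    and Y_op: "op_norm_on S Y \<le> K * d"
    and Z_entries: "\<forall>i\<in>S. \<forall>j\<in>S. \<bar>Z i j\<bar> \<le> K * d / (\<zeta> * real n)"
    and resolvable: "\<forall>T. T \<subseteq> S \<and> real (card T) \<ge> (1 - \<zeta>) * real n \<longrightarrow>
           resolvable_on T (\<lambda>i j. (A i j - F i j) * (lt i * lt j))
             (10 * d * K^3) (0.5 * d * K * (\<gamma> + (real n - real (card T)) / real n))"
begin

definition resid :: "nat \<Rightarrow> nat \<Rightarrow> real" where
  "resid i j = (A i j - F i j) * (lt i * lt j)"

definition zmax :: real where
  "zmax = K * d / (\<zeta> * real n)"

lemma finite_S: "finite S"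
  using S_sub finite_subset by blast

lemma card_S_le: "real (card S) \<le> real n"
  using card_mono[OF _ S_sub] by simp

lemma \<gamma>_nonneg: "0 \<le> \<gamma>"
proof -
  have "(1 - \<gamma>) * real n \<le> real n" using S_card card_S_le by linarith
  then show ?thesis using n_pos by (simp add: algebra_simps zero_le_mult_iff)
qed

lemma K_pos: "0 < K" and Kd_pos: "0 < K * d" and zmax_pos: "0 < zmax"
  using K_ge d_pos \<zeta>_pos n_pos unfolding zmax_def by simp_all

lemma abs_lt: "i \<in> S \<Longrightarrow> \<bar>lt i\<bar> = 1"
  using lt_labelling S_sub unfolding is_labelling_def by auto

lemma lt_sq: "i \<in> S \<Longrightarrow> (lt i)^2 = 1"
  using lt_labelling S_sub unfolding is_labelling_def by auto

lemma zmax_mult_le: "x \<le> \<zeta> * real n \<Longrightarrow> zmax * x \<le> K * d"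
  using mult_left_mono[of x "\<zeta> * real n" zmax] zmax_pos \<zeta>_pos n_pos unfolding zmax_def by simp

lemma resid_split:
  "i \<in> S \<Longrightarrow> j \<in> S \<Longrightarrow> resid i j = lt i * Y i j * lt j + lt i * Z i j * lt j"
  using YZ_split unfolding resid_def by (simp add: algebra_simps)

lemma abs_Z_term_le: "i \<in> S \<Longrightarrow> j \<in> S \<Longrightarrow> \<bar>lt i * Z i j * lt j\<bar> \<le> zmax"
  using Z_entries abs_lt unfolding zmax_def by (simp add: abs_mult)

lemma resid_bilinear_le:
  assumes P: "P \<subseteq> S" and Q: "Q \<subseteq> S"
  shows "\<bar>\<Sum>i\<in>P. \<Sum>j\<in>Q. p i * resid i j * q j\<bar> \<le>
     K * d * sqrt (\<Sum>i\<in>P. (p i)^2) * sqrt (\<Sum>j\<in>Q. (q j)^2) + zmax * (\<Sum>i\<in>P. \<bar>p i\<bar>) * (\<Sum>j\<in>Q. \<bar>q j\<bar>)"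
proof -
  define a where "a i = (if i \<in> P then p i * lt i else 0)" for i
  define b where "b j = (if j \<in> Q then q j * lt j else 0)" for j
  have split: "(\<Sum>i\<in>P. \<Sum>j\<in>Q. p i * resid i j * q j) =
      (\<Sum>i\<in>S. \<Sum>j\<in>S. a i * Y i j * b j) + (\<Sum>i\<in>P. \<Sum>j\<in>Q. p i * (lt i * Z i j * lt j) * q j)"
  proof -
    have "(\<Sum>i\<in>S. \<Sum>j\<in>S. a i * Y i j * b j) =
          (\<Sum>i\<in>S. if i \<in> P then (\<Sum>j\<in>S. if j \<in> Q then p i * (lt i * Y i j * lt j) * q j else 0) else 0)"
      unfolding a_def b_def by (intro sum.cong refl) (auto simp: mult_ac intro: sum.cong)
    also have "\<dots> = (\<Sum>i\<in>P. \<Sum>j\<in>Q. p i * (lt i * Y i j * lt j) * q j)"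
      using sum_if_mem_subset[OF finite_S P] sum_if_mem_subset[OF finite_S Q] by simp
    moreover have "(\<Sum>i\<in>P. \<Sum>j\<in>Q. p i * resid i j * q j) = (\<Sum>i\<in>P. \<Sum>j\<in>Q.
        p i * (lt i * Y i j * lt j) * q j + p i * (lt i * Z i j * lt j) * q j)"
      using P Q by (intro sum.cong refl) (simp add: resid_split ring_distribs subset_iff)
    ultimately show ?thesis by (simp add: sum.distrib)
  qed
  have "(a i)^2 = (if i \<in> P then (p i)^2 else 0)" "(b i)^2 = (if i \<in> Q then (q i)^2 else 0)" if "i \<in> S" for i
    using lt_sq[OF that] unfolding a_def b_def by (simp_all add: power_mult_distrib)
  then have sq: "(\<Sum>i\<in>S. (a i)^2) = (\<Sum>i\<in>P. (p i)^2)" "(\<Sum>i\<in>S. (b i)^2) = (\<Sum>i\<in>Q. (q i)^2)"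
    using sum_if_mem_subset[OF finite_S P, of "\<lambda>i. (p i)^2"] sum_if_mem_subset[OF finite_S Q, of "\<lambda>i. (q i)^2"]
    by (simp_all cong: sum.cong)
  have "\<bar>\<Sum>i\<in>S. \<Sum>j\<in>S. a i * Y i j * b j\<bar> \<le> op_norm_on S Y * sqrt (\<Sum>i\<in>P. (p i)^2) * sqrt (\<Sum>j\<in>Q. (q j)^2)"
    using bilinear_le_op_norm_on[OF finite_S, of a Y b] unfolding sq .
  also have "\<dots> \<le> K * d * sqrt (\<Sum>i\<in>P. (p i)^2) * sqrt (\<Sum>j\<in>Q. (q j)^2)"
    by (intro mult_right_mono Y_op) (simp_all add: sum_nonneg)
  finally have Ypart: "\<bar>\<Sum>i\<in>S. \<Sum>j\<in>S. a i * Y i j * b j\<bar> \<le>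
      K * d * sqrt (\<Sum>i\<in>P. (p i)^2) * sqrt (\<Sum>j\<in>Q. (q j)^2)" .
  have "\<bar>\<Sum>i\<in>P. \<Sum>j\<in>Q. p i * (lt i * Z i j * lt j) * q j\<bar> \<le> (\<Sum>i\<in>P. \<Sum>j\<in>Q. zmax * \<bar>p i\<bar> * \<bar>q j\<bar>)"
  proof (rule order_trans[OF sum_abs sum_mono], rule order_trans[OF sum_abs sum_mono])
    fix i j assume "i \<in> P" "j \<in> Q"
    then have "\<bar>lt i * Z i j * lt j\<bar> * (\<bar>p i\<bar> * \<bar>q j\<bar>) \<le> zmax * (\<bar>p i\<bar> * \<bar>q j\<bar>)"
      using abs_Z_term_le P Q by (intro mult_right_mono) auto
    then show "\<bar>p i * (lt i * Z i j * lt j) * q j\<bar> \<le> zmax * \<bar>p i\<bar> * \<bar>q j\<bar>"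
      by (simp add: abs_mult mult_ac)
  qed
  also have "\<dots> = zmax * (\<Sum>i\<in>P. \<bar>p i\<bar>) * (\<Sum>j\<in>Q. \<bar>q j\<bar>)"
    by (simp add: sum_distrib_left sum_distrib_right mult_ac)
  finally show ?thesis unfolding split using Ypart by linarith
qed

lemma resid_pairing_le:
  assumes P: "P \<subseteq> S" and Q: "Q \<subseteq> S" and N: "\<forall>i<n. \<forall>j<n. 0 \<le> N i j"
  shows "\<bar>\<Sum>i\<in>P. \<Sum>j\<in>Q. resid i j * N i j\<bar> \<le> K * d * trace_norm n N + zmax * (\<Sum>i\<in>P. \<Sum>j\<in>Q. N i j)"
proof -
  have "(\<Sum>i\<in>P. \<Sum>j\<in>Q. resid i j * N i j) =
      (\<Sum>i\<in>P. \<Sum>j\<in>Q. lt i * Y i j * lt j * N i j + (lt i * Z i j * lt j) * N i j)"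
    using P Q by (intro sum.cong refl) (simp add: resid_split ring_distribs subset_iff)
  then have split: "(\<Sum>i\<in>P. \<Sum>j\<in>Q. resid i j * N i j) =
      (\<Sum>i\<in>P. \<Sum>j\<in>Q. lt i * Y i j * lt j * N i j) + (\<Sum>i\<in>P. \<Sum>j\<in>Q. (lt i * Z i j * lt j) * N i j)"
    by (simp add: sum.distrib)
  have "\<bar>\<Sum>i\<in>P. \<Sum>j\<in>Q. lt i * Y i j * lt j * N i j\<bar> \<le> op_norm_on S Y * trace_norm n N"
    using P Q abs_lt by (intro abs_pairing_le_op_norm_trace_norm[OF S_sub]) auto
  also have "\<dots> \<le> K * d * trace_norm n N"
    using Y_op trace_norm_nonneg by (intro mult_right_mono) auto
  finally have Ypart: "\<bar>\<Sum>i\<in>P. \<Sum>j\<in>Q. lt i * Y i j * lt j * N i j\<bar> \<le> K * d * trace_norm n N" .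
  have "\<bar>\<Sum>i\<in>P. \<Sum>j\<in>Q. (lt i * Z i j * lt j) * N i j\<bar> \<le> (\<Sum>i\<in>P. \<Sum>j\<in>Q. zmax * N i j)"
  proof (rule order_trans[OF sum_abs sum_mono], rule order_trans[OF sum_abs sum_mono])
    fix i j assume ij: "i \<in> P" "j \<in> Q"
    then have "i \<in> S" "j \<in> S" using P Q by auto
    then have "\<bar>lt i * Z i j * lt j\<bar> \<le> zmax" "0 \<le> N i j" using abs_Z_term_le N S_sub by (auto simp: subset_iff)
    then show "\<bar>(lt i * Z i j * lt j) * N i j\<bar> \<le> zmax * N i j"
      by (simp add: abs_mult mult_right_mono)
  qed
  then show ?thesis unfolding split using Ypart by (simp add: sum_distrib_left)
qed

lemma resid_pseudorect_le:
  assumes P: "P \<subseteq> S" and Q: "Q \<subseteq> S" and N: "pseudorect n \<theta> N"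
  shows "\<bar>\<Sum>i\<in>P. \<Sum>j\<in>Q. resid i j * N i j\<bar> \<le> K * d * (\<theta> * real n) * (1 + \<theta> / \<zeta>)"
proof -
  have N0: "\<forall>i<n. \<forall>j<n. 0 \<le> N i j" and tr: "trace_norm n N \<le> \<theta> * real n"
    and mass: "(\<Sum>i<n. \<Sum>j<n. \<bar>N i j\<bar>) \<le> \<theta>^2 * (real n)^2"
    using N unfolding pseudorect_def by auto
  have "(\<Sum>i\<in>P. \<Sum>j\<in>Q. N i j) = (\<Sum>i<n. \<Sum>j<n. if i \<in> P \<and> j \<in> Q then N i j else 0)"
    using P Q S_sub by (intro sum_lessThan_if_rect[symmetric]) auto
  also have "\<dots> \<le> (\<Sum>i<n. \<Sum>j<n. \<bar>N i j\<bar>)" by (intro sum_mono) auto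
  finally have "zmax * (\<Sum>i\<in>P. \<Sum>j\<in>Q. N i j) \<le> zmax * (\<theta>^2 * (real n)^2)"
    using mass zmax_pos by (intro mult_left_mono) auto
  also have "\<dots> = K * d * (\<theta> * real n) * (\<theta> / \<zeta>)"
    unfolding zmax_def using \<zeta>_pos n_pos by (simp add: field_simps power2_eq_square)
  finally show ?thesis
    using resid_pairing_le[OF P Q N0] mult_left_mono[OF tr, of "K * d"] Kd_pos by (simp add: algebra_simps)
qed

lemma resid_le_signed_A:
  assumes "P \<subseteq> S" "Q \<subseteq> S" "\<forall>i\<in>P. \<forall>j\<in>Q. 0 \<le> H i j"
  shows "(\<Sum>i\<in>P. \<Sum>j\<in>Q. resid i j * H i j) \<le> (\<Sum>i\<in>P. \<Sum>j\<in>Q. A i j * (lt i * lt j) * H i j)"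
proof (intro sum_mono)
  fix i j assume "i \<in> P" "j \<in> Q"
  then have "0 \<le> F i j * (lt i * lt j) * H i j" using assms F_sign by (meson mult_nonneg_nonneg subsetD)
  then show "resid i j * H i j \<le> A i j * (lt i * lt j) * H i j" unfolding resid_def by (simp add: algebra_simps)
qed


lemma resolvable_resid:
  assumes "T \<subseteq> S" "real (card T) \<ge> (1 - \<zeta>) * real n"
    and "\<forall>i\<in>T. 0 \<le> x i \<and> x i \<le> 1" "(\<Sum>i\<in>T. x i) \<le> real (card T) / 10^6"
  shows "10 * d * K^3 * (\<Sum>i\<in>T. x i) - 0.5 * d * K * (\<gamma> + (real n - real (card T)) / real n) * real (card T)
    \<le> (\<Sum>i\<in>T. \<Sum>j\<in>T. resid i j * x i)"
proof -
  have "(10::real) powi (-6) = 1/10^6" by (simp add: power_int_def field_simps)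
  then show ?thesis using resolvable assms unfolding resolvable_on_def resid_def by auto
qed

text \<open>Testing resolvability of the whole of S against the constant vector 1/10^6 shows that the
  hypotheses can only hold when \<zeta> is tiny; this makes every vector of mass at most \<zeta> n admissible
  in the resolvability condition.\<close>

lemma \<zeta>_tiny: "\<zeta> \<le> 1/10^8"
proof (rule ccontr)
  assume "\<not> \<zeta> \<le> 1/10^8"
  then have \<zeta>_inv: "1/\<zeta> < 100000000" using \<zeta>_pos by (simp add: field_simps)
  define s where "s = real (card S)"
  define D where "D = d * K * s"
  have \<gamma>_le_\<zeta>: "\<gamma> \<le> \<zeta>" using \<gamma>_le \<zeta>_pos by simp
  have "0 < (1 - \<gamma>) * real n" using \<gamma>_le_\<zeta> \<zeta>_lt_1 n_pos by simp
  then have s_pos: "0 < s" using S_card unfolding s_def by linarith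
  have "(1 - \<zeta>) * real n \<le> (1 - \<gamma>) * real n" using \<gamma>_le_\<zeta> by (intro mult_right_mono) auto
  then have "(1 - \<zeta>) * real n \<le> real (card S)" using S_card by linarith
  from resolvable_resid[OF subset_refl this, of "\<lambda>_. 1/10^6"]
  have res: "10 * d * K^3 * (s / 10^6) - 0.5 * d * K * (\<gamma> + (real n - s) / real n) * s
        \<le> (\<Sum>i\<in>S. \<Sum>j\<in>S. 1 * resid i j * 1) / 10^6"
    unfolding s_def by (simp add: sum_divide_distrib)
  have "(real n - s) / real n \<le> \<gamma>" using S_card n_pos unfolding s_def by (simp add: field_simps)
  then have slack: "0.5 * d * K * (\<gamma> + (real n - s) / real n) * s \<le> D * \<gamma>"
    using d_pos K_pos s_pos \<gamma>_nonneg unfolding D_def by (simp add: mult_le_cancel_left_pos mult_le_cancel_right_pos)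
  have "zmax * s \<le> K * d / \<zeta>"
    using mult_left_mono[OF card_S_le, of "K * d"] Kd_pos n_pos \<zeta>_pos unfolding zmax_def s_def
    by (simp add: field_simps)
  then have "zmax * s * s \<le> K * d / \<zeta> * s" using s_pos by (intro mult_right_mono) auto
  also have "\<dots> = D / \<zeta>" unfolding D_def by (simp add: field_simps)
  finally have "zmax * s * s \<le> D / \<zeta>" .
  then have "(\<Sum>i\<in>S. \<Sum>j\<in>S. 1 * resid i j * 1) \<le> D + D / \<zeta>"
    using resid_bilinear_le[OF subset_refl subset_refl, of "\<lambda>_. 1" "\<lambda>_. 1"] s_pos
    unfolding s_def D_def by (simp add: mult_ac)
  then have "(\<Sum>i\<in>S. \<Sum>j\<in>S. 1 * resid i j * 1) / 10^6 \<le> (D + D / \<zeta>) / 10^6"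
    by (simp add: divide_right_mono)
  moreover have "10 * d * K^3 * (s / 10^6) = D * K^2 / 100000"
    unfolding D_def by (simp add: power2_eq_square power3_eq_cube)
  ultimately have "D * K^2 / 100000 - D * \<gamma> \<le> (D + D / \<zeta>) / 10^6"
    using res slack by linarith
  then have "D * (K^2 / 100000 - \<gamma> - (1 + 1 / \<zeta>) / 1000000) \<le> 0"
    by (simp add: algebra_simps add_divide_distrib)
  then have "K^2 / 100000 - \<gamma> - (1 + 1 / \<zeta>) / 1000000 \<le> 0"
    using d_pos K_pos s_pos unfolding D_def by (simp add: mult_le_0_iff)
  moreover have "100000000 \<le> K^2" using power_mono[OF K_ge, of 2] by simp
  moreover have "\<gamma> \<le> 1" using \<gamma>_le \<zeta>_lt_1 by simp
  ultimately show False using \<zeta>_inv by simp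
qed

lemma resolvable_lower_bound:
  assumes T: "T \<subseteq> S" "real (card T) \<ge> (1 - \<zeta>) * real n"
    and x: "\<forall>i\<in>T. 0 \<le> x i \<and> x i \<le> 1" "(\<Sum>i\<in>T. x i) \<le> \<zeta> * real n"
  shows "10 * d * K^3 * (\<Sum>i\<in>T. x i) - 0.5 * d * K * (\<gamma> * real n + (real n - real (card T)))
    \<le> (\<Sum>i\<in>T. \<Sum>j\<in>T. resid i j * x i)"
proof -
  have t_le: "real (card T) \<le> real n" using card_mono[OF finite_S T(1)] card_S_le by simp
  have "\<zeta> * real n \<le> real n / 10^8" using mult_right_mono[OF \<zeta>_tiny, of "real n"] by simp
  also have "\<dots> \<le> (1 - \<zeta>) / 10^6 * real n"
    using mult_right_mono[of "1/10^8" "(1 - \<zeta>) / 10^6" "real n"] \<zeta>_tiny by simp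
  also have "\<dots> \<le> real (card T) / 10^6" using T(2) by (simp add: divide_right_mono)
  finally have res: "10 * d * K^3 * (\<Sum>i\<in>T. x i) - 0.5 * d * K * (\<gamma> + (real n - real (card T)) / real n) * real (card T)
    \<le> (\<Sum>i\<in>T. \<Sum>j\<in>T. resid i j * x i)"
    using resolvable_resid[OF T x(1)] x(2) by linarith
  have "(\<gamma> + (real n - real (card T)) / real n) * real (card T)
      = \<gamma> * real (card T) + (real n - real (card T)) * (real (card T) / real n)"
    by (simp add: algebra_simps)
  also have "\<dots> \<le> \<gamma> * real n + (real n - real (card T)) * 1"
    using \<gamma>_nonneg t_le n_pos by (intro add_mono mult_left_mono) (auto simp: field_simps)
  finally have "0.5 * d * K * (\<gamma> + (real n - real (card T)) / real n) * real (card T)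
      \<le> 0.5 * d * K * (\<gamma> * real n + (real n - real (card T)))"
    using mult_left_mono[of _ _ "0.5 * d * K"] d_pos K_pos by (simp add: mult.assoc)
  then show ?thesis using res by linarith
qed

lemma resid_small_bilinear_le:
  assumes P: "P \<subseteq> S" and Q: "Q \<subseteq> S"
    and p: "\<forall>i\<in>P. 0 \<le> p i \<and> p i \<le> 1" and q: "\<forall>j\<in>Q. 0 \<le> q j \<and> q j \<le> 1"
    and m: "(\<Sum>i\<in>P. p i) \<le> m" "(\<Sum>j\<in>Q. q j) \<le> m" "m \<le> \<zeta> * real n"
  shows "\<bar>\<Sum>i\<in>P. \<Sum>j\<in>Q. p i * resid i j * q j\<bar> \<le> 2 * K * d * m"
proof -
  have "(\<Sum>i\<in>P. (p i)^2) \<le> (\<Sum>i\<in>P. p i)" "(\<Sum>j\<in>Q. (q j)^2) \<le> (\<Sum>j\<in>Q. q j)"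
    using p q by (auto intro!: sum_mono simp: power2_eq_square mult_left_le_one_le)
  then have sq: "(\<Sum>i\<in>P. (p i)^2) \<le> m" "(\<Sum>j\<in>Q. (q j)^2) \<le> m" using m by linarith+
  have abs: "(\<Sum>i\<in>P. \<bar>p i\<bar>) = (\<Sum>i\<in>P. p i)" "(\<Sum>j\<in>Q. \<bar>q j\<bar>) = (\<Sum>j\<in>Q. q j)"
    using p q by (auto intro: sum.cong)
  have m0: "0 \<le> m" using m(1) p sum_nonneg[of P p] by auto
  have "K * d * sqrt (\<Sum>i\<in>P. (p i)^2) * sqrt (\<Sum>j\<in>Q. (q j)^2) \<le> K * d * sqrt m * sqrt m"
    using sq K_pos d_pos m0 by (intro mult_mono mult_left_mono) (auto intro: sum_nonneg)
  moreover have "zmax * (\<Sum>i\<in>P. p i) * (\<Sum>j\<in>Q. q j) \<le> zmax * m * m"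
    using m m0 zmax_pos p q by (intro mult_mono mult_left_mono) (auto intro: sum_nonneg)
  moreover have "zmax * m * m \<le> K * d * m" using zmax_mult_le[OF m(3)] m0 by (simp add: mult_right_mono)
  moreover have "K * d * sqrt m * sqrt m = K * d * m" using m0 by (simp add: mult.assoc)
  ultimately show ?thesis using resid_bilinear_le[OF P Q, of p q] unfolding abs by linarith
qed


lemma sqrt_K_ge: "100 \<le> sqrt K"
  using real_sqrt_le_mono[OF K_ge] by (simp add: real_sqrt_eq_iff power_even_eq)

lemma sqrt_K_le: "sqrt K \<le> K"
  using sqrt_K_ge K_pos by (metis real_sqrt_le_iff real_sqrt_pow2 power2_eq_square less_le_trans
      mult_le_cancel_left1 one_le_numeral order_trans real_sqrt_ge_1_iff zero_less_numeral less_imp_le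
      mult_right_mono real_sqrt_ge_zero)

definition Bad :: "(nat \<Rightarrow> real) \<Rightarrow> nat set" where
  "Bad l = {i. i < n \<and> (i \<notin> S \<or> l i \<noteq> lt i)}"

definition Good :: "(nat \<Rightarrow> real) \<Rightarrow> nat set" where
  "Good l = {i \<in> S. l i = lt i}"

text \<open>The indicator of the bad set is a feasible SDP solution with \<rho> n equal to this value.\<close>

definition bad_budget :: "(nat \<Rightarrow> real) \<Rightarrow> real" where
  "bad_budget l = real (card (Bad l)) + \<gamma> * real n"

lemma Good_subset_S: "Good l \<subseteq> S"
  unfolding Good_def by auto

lemma Good_subset: "Good l \<subseteq> {..<n}"
  using Good_subset_S S_sub by blast

lemma Bad_subset: "Bad l \<subseteq> {..<n}"
  unfolding Bad_def by auto

lemma Good_iff_not_Bad: "i < n \<Longrightarrow> i \<in> Good l \<longleftrightarrow> i \<notin> Bad l"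
  unfolding Good_def Bad_def using S_sub by auto

lemma card_Good: "real (card (Good l)) = real n - real (card (Bad l))"
proof -
  have "Good l \<union> Bad l = {..<n}" "Good l \<inter> Bad l = {}"
    using Good_iff_not_Bad Good_subset Bad_subset by blast+
  then have "card (Good l) + card (Bad l) = n"
    using card_Un_disjoint[of "Good l" "Bad l"] finite_subset[OF Good_subset] finite_subset[OF Bad_subset] by simp
  then show ?thesis by simp
qed

lemma card_Bad_le_budget: "real (card (Bad l)) \<le> bad_budget l"
  unfolding bad_budget_def using \<gamma>_nonneg by simp

lemma bad_budget_nonneg: "0 \<le> bad_budget l"
  unfolding bad_budget_def using \<gamma>_nonneg by simp

lemma card_Good_ge: "bad_budget l \<le> \<zeta> * real n \<Longrightarrow> (1 - \<zeta>) * real n \<le> real (card (Good l))"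
  using card_Good[of l] mult_nonneg_nonneg[OF \<gamma>_nonneg, of "real n"] unfolding bad_budget_def
  by (simp add: algebra_simps)

lemma resid_selector_remainder_le:
  assumes P: "P \<subseteq> S" and Q: "Q \<subseteq> S" and N: "pseudorect n (sqrt (\<rho>' * (K * \<rho>'))) N"
    and \<rho>': "0 \<le> \<rho>'" "\<rho>' \<le> \<zeta>"
  shows "\<bar>\<Sum>i\<in>P. \<Sum>j\<in>Q. resid i j * N i j\<bar> \<le> 2 * (d * K^2 * \<rho>' * real n)"
proof -
  have \<theta>: "sqrt (\<rho>' * (K * \<rho>')) = sqrt K * \<rho>'" using \<rho>'(1) K_pos by (simp add: real_sqrt_mult mult_ac)
  have "1 + sqrt K * \<rho>' / \<zeta> \<le> 1 + sqrt K"
    using mult_left_mono[OF \<rho>'(2), of "sqrt K"] \<zeta>_pos K_pos by (simp add: divide_le_eq)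
  then have "sqrt K * \<rho>' * real n * (1 + sqrt K * \<rho>' / \<zeta>) \<le> sqrt K * \<rho>' * real n * (1 + sqrt K)"
    using \<rho>'(1) K_pos by (intro mult_left_mono) auto
  also have "\<dots> = \<rho>' * real n * (sqrt K + K)" using K_pos by (simp add: algebra_simps)
  also have "\<dots> \<le> \<rho>' * real n * (2 * K)" using sqrt_K_le \<rho>'(1) by (intro mult_left_mono) auto
  finally have "K * d * (sqrt K * \<rho>' * real n * (1 + sqrt K * \<rho>' / \<zeta>)) \<le> K * d * (\<rho>' * real n * (2 * K))"
    using Kd_pos by (intro mult_left_mono) auto
  moreover have "K * d * (\<rho>' * real n * (2 * K)) = 2 * (d * K^2 * \<rho>' * real n)"
    by (simp add: power2_eq_square mult_ac)
  moreover have "K * d * (sqrt K * \<rho>' * real n) * (1 + sqrt K * \<rho>' / \<zeta>)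
      = K * d * (sqrt K * \<rho>' * real n * (1 + sqrt K * \<rho>' / \<zeta>))"
    by (simp only: mult.assoc)
  ultimately show ?thesis using resid_pseudorect_le[OF P Q N] unfolding \<theta> by linarith
qed

lemma good_block_constraint:
  assumes budget: "bad_budget l \<le> \<zeta> * real n"
    and \<rho>': "bad_budget l \<le> K * \<rho>' * real n" "\<rho>' \<le> \<zeta>"
    and sel: "row_selector n \<rho>' (K * \<rho>') M x"
  shows "10 * d * K^2 * (K * (\<Sum>i\<in>Good l. x i) - \<rho>' * real n)
    \<le> (\<Sum>i\<in>Good l. \<Sum>j\<in>Good l. A i j * (lt i * lt j) * M i j)"
proof -
  let ?G = "Good l"
  obtain N' where M01: "\<forall>i<n. \<forall>j<n. 0 \<le> M i j \<and> M i j \<le> 1" and x01: "\<forall>i<n. 0 \<le> x i \<and> x i \<le> 1"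
    and sum_x: "(\<Sum>i<n. x i) \<le> \<rho>' * real n" and N': "pseudorect n (sqrt (\<rho>' * (K * \<rho>'))) N'"
    and MN: "\<forall>i<n. \<forall>j<n. M i j = x i - N' i j"
    using sel unfolding row_selector_def by blast
  have sum_Gx: "(\<Sum>i\<in>?G. x i) \<le> \<rho>' * real n"
    using sum_mono2[OF _ Good_subset[of l], of x] x01 sum_x by fastforce
  have "0 \<le> \<rho>' * real n" using sum_x sum_nonneg[of "{..<n}" x] x01 by fastforce
  then have \<rho>'0: "0 \<le> \<rho>'" using n_pos by (simp add: zero_le_mult_iff)
  have "(\<Sum>i\<in>?G. \<Sum>j\<in>?G. resid i j * M i j) \<le> (\<Sum>i\<in>?G. \<Sum>j\<in>?G. A i j * (lt i * lt j) * M i j)"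
    using M01 Good_subset by (intro resid_le_signed_A[OF Good_subset_S Good_subset_S]) auto
  moreover have "(\<Sum>i\<in>?G. \<Sum>j\<in>?G. resid i j * M i j) =
      (\<Sum>i\<in>?G. \<Sum>j\<in>?G. resid i j * x i) - (\<Sum>i\<in>?G. \<Sum>j\<in>?G. resid i j * N' i j)"
    using MN Good_subset by (simp add: sum_subtractf[symmetric] right_diff_distrib subset_iff cong: sum.cong)
  moreover have "10 * d * K^3 * (\<Sum>i\<in>?G. x i) - 0.5 * d * K * (K * \<rho>' * real n)
      \<le> (\<Sum>i\<in>?G. \<Sum>j\<in>?G. resid i j * x i)"
  proof -
    have x_G: "\<forall>i\<in>?G. 0 \<le> x i \<and> x i \<le> 1" using x01 Good_subset by blast
    have "\<rho>' * real n \<le> \<zeta> * real n" using \<rho>'(2) by (simp add: mult_right_mono)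
    then have "(\<Sum>i\<in>?G. x i) \<le> \<zeta> * real n" using sum_Gx by linarith
    note rlb = resolvable_lower_bound[OF Good_subset_S card_Good_ge[OF budget] x_G this]
    have "\<gamma> * real n + (real n - real (card ?G)) = bad_budget l"
      unfolding bad_budget_def card_Good by simp
    then have "0.5 * d * K * (\<gamma> * real n + (real n - real (card ?G))) \<le> 0.5 * d * K * (K * \<rho>' * real n)"
      using \<rho>'(1) d_pos K_pos by (intro mult_left_mono) auto
    then show ?thesis using rlb by linarith
  qed
  moreover have "\<bar>\<Sum>i\<in>?G. \<Sum>j\<in>?G. resid i j * N' i j\<bar> \<le> 2 * (d * K^2 * \<rho>' * real n)"
    by (rule resid_selector_remainder_le[OF Good_subset_S Good_subset_S N' \<rho>'0 \<rho>'(2)])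
  moreover have "10 * d * K^2 * (K * (\<Sum>i\<in>?G. x i) - \<rho>' * real n)
      = 10 * d * K^3 * (\<Sum>i\<in>?G. x i) - 10 * (d * K^2 * \<rho>' * real n)"
    by (simp add: algebra_simps power2_eq_square power3_eq_cube)
  moreover have "0.5 * d * K * (K * \<rho>' * real n) = 0.5 * (d * K^2 * \<rho>' * real n)"
    by (simp add: power2_eq_square mult_ac)
  moreover have "0 \<le> d * K^2 * \<rho>' * real n" using d_pos \<rho>'0 by simp
  ultimately show ?thesis by linarith
qed


lemma bad_indicator_feasible:
  assumes budget: "bad_budget l \<le> \<zeta> * real n"
  shows "boost_feasible n A l \<zeta> d K (bad_budget l / real n) (\<lambda>i. if i \<in> Bad l then 1 else 0)
    (\<lambda>i j. if i \<in> Good l \<and> j \<in> Good l then 1 else 0) (\<lambda>i j. if i \<in> Bad l \<and> j \<in> Bad l then 1 else 0)"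
  unfolding boost_feasible_def
proof (intro conjI allI impI)
  let ?G = "Good l" and ?B = "Bad l" and ?\<rho> = "bad_budget l / real n"
  have \<rho>n: "?\<rho> * real n = bad_budget l" using n_pos by simp
  show "0 \<le> ?\<rho>" using card_Bad_le_budget[of l] by simp
  show "?\<rho> \<le> \<zeta>" using budget n_pos by (simp add: divide_le_eq)
  show "pseudorect n ?\<rho> (\<lambda>i j. if i \<in> ?B \<and> j \<in> ?B then 1 else 0)"
    using card_Bad_le_budget[of l] \<rho>n by (intro pseudorect_indicator_rect Bad_subset) auto
  have "(\<Sum>i<n. if i \<in> ?B then 1 else 0) = real (card ?B)"
    using sum_if_mem_subset[OF _ Bad_subset[of l], of "\<lambda>_. 1"] by simp
  then show "(\<Sum>i<n. if i \<in> ?B then 1 else 0) \<le> ?\<rho> * real n" using card_Bad_le_budget \<rho>n by simp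
  show "0 \<le> (if i \<in> ?B then 1 else (0::real))" "(if i \<in> ?B then 1 else (0::real)) \<le> 1" for i
    by simp_all
  fix i j assume ij: "i < n" "j < n"
  show "0 \<le> (if i \<in> ?G \<and> j \<in> ?G then 1 else (0::real))" by simp
  show "(if i \<in> ?G \<and> j \<in> ?G then 1 else (0::real)) =
      1 - (if i \<in> ?B then 1 else 0) - (if j \<in> ?B then 1 else 0) + (if i \<in> ?B \<and> j \<in> ?B then 1 else 0)"
    using Good_iff_not_Bad[OF ij(1)] Good_iff_not_Bad[OF ij(2)] by auto
next
  fix \<rho>' M x
  assume "bad_budget l / real n / K \<le> \<rho>' \<and> \<rho>' \<le> \<zeta> \<and> row_selector n \<rho>' (K * \<rho>') M x"
  then have \<rho>': "bad_budget l \<le> K * \<rho>' * real n" "\<rho>' \<le> \<zeta>" and sel: "row_selector n \<rho>' (K * \<rho>') M x"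
    using K_pos n_pos by (auto simp: field_simps)
  have "(\<Sum>i<n. \<Sum>j<n. A i j * (l i * l j) * (if i \<in> Good l \<and> j \<in> Good l then 1 else 0) * M i j)
      = (\<Sum>i<n. \<Sum>j<n. if i \<in> Good l \<and> j \<in> Good l then A i j * (lt i * lt j) * M i j else 0)"
    unfolding Good_def by (intro sum.cong refl) auto
  also have "\<dots> = (\<Sum>i\<in>Good l. \<Sum>j\<in>Good l. A i j * (lt i * lt j) * M i j)"
    by (rule sum_lessThan_if_rect[OF Good_subset Good_subset])
  finally have lhs: "(\<Sum>i<n. \<Sum>j<n. A i j * (l i * l j) * (if i \<in> Good l \<and> j \<in> Good l then 1 else 0) * M i j)
      = (\<Sum>i\<in>Good l. \<Sum>j\<in>Good l. A i j * (lt i * lt j) * M i j)" .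
  have "(\<Sum>i<n. x i * (1 - (if i \<in> Bad l then 1 else 0))) = (\<Sum>i<n. if i \<in> Good l then x i else 0)"
    using Good_iff_not_Bad by (intro sum.cong refl) auto
  then have rhs: "(\<Sum>i<n. x i * (1 - (if i \<in> Bad l then 1 else 0))) = (\<Sum>i\<in>Good l. x i)"
    using sum_if_mem_subset[OF _ Good_subset[of l]] by simp
  show "10 * d * K^2 * (K * (\<Sum>i<n. x i * (1 - (if i \<in> Bad l then 1 else 0))) - \<rho>' * real n)
      \<le> (\<Sum>i<n. \<Sum>j<n. A i j * (l i * l j) * (if i \<in> Good l \<and> j \<in> Good l then 1 else 0) * M i j)"
    unfolding lhs rhs by (rule good_block_constraint[OF budget \<rho>' sel])
qed

lemma sdp_value_le:
  assumes "bad_budget l \<le> \<zeta> * real n" and "boost_optimal n A l \<zeta> d K \<rho> w W N"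
  shows "\<rho> * real n \<le> bad_budget l"
proof -
  have "\<rho> \<le> bad_budget l / real n"
    using assms(2) bad_indicator_feasible[OF assms(1)] unfolding boost_optimal_def by blast
  then show ?thesis using n_pos by (simp add: field_simps)
qed


definition missed :: "(nat \<Rightarrow> real) \<Rightarrow> (nat \<Rightarrow> real) \<Rightarrow> nat set" where
  "missed l w = {i \<in> S. l i \<noteq> lt i \<and> w i < 1 - 1 / sqrt K}"

lemma missed_subset_S: "missed l w \<subseteq> S"
  unfolding missed_def by auto

lemma missed_subset_Bad: "missed l w \<subseteq> Bad l"
  unfolding missed_def Bad_def using S_sub by auto

lemma missed_Good_disjoint: "missed l w \<inter> Good l = {}"
  unfolding missed_def Good_def by auto

lemma card_missed_le: "real (card (missed l w)) \<le> bad_budget l"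
  using card_mono[OF finite_subset[OF Bad_subset] missed_subset_Bad, of l w] card_Bad_le_budget[of l] by simp

lemma missed_selector_pairing_le:
  assumes lab: "is_labelling n l" and W: "\<forall>i<n. \<forall>j<n. 0 \<le> W i j"
  shows "(\<Sum>i<n. \<Sum>j<n. A i j * (l i * l j) * W i j *
      ((if i \<in> missed l w then 1 else 0) - (if i \<in> missed l w \<and> j \<in> Bad l then 1 else 0)))
    \<le> - (\<Sum>i\<in>missed l w. \<Sum>j\<in>Good l. resid i j * W i j)"
proof -
  let ?R = "missed l w" and ?G = "Good l" and ?B = "Bad l"
  have sign: "l i * l j = - (lt i * lt j)" if "i \<in> ?R" "j \<in> ?G" for i j
  proof -
    have "i < n" using that(1) missed_subset_S S_sub by blast
    then have "l i = - lt i"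
      using that(1) lab lt_labelling unfolding missed_def is_labelling_def by force
    then show ?thesis using that(2) unfolding Good_def by simp
  qed
  have "(\<Sum>i<n. \<Sum>j<n. A i j * (l i * l j) * W i j * ((if i \<in> ?R then 1 else 0) - (if i \<in> ?R \<and> j \<in> ?B then 1 else 0)))
      = (\<Sum>i<n. \<Sum>j<n. if i \<in> ?R \<and> j \<in> ?G then - (A i j * (lt i * lt j) * W i j) else 0)"
    using Good_iff_not_Bad sign by (intro sum.cong refl) auto
  also have "\<dots> = - (\<Sum>i\<in>?R. \<Sum>j\<in>?G. A i j * (lt i * lt j) * W i j)"
    using sum_lessThan_if_rect[OF order_trans[OF missed_subset_Bad Bad_subset] Good_subset]
    by (simp add: sum_negf)
  also have "\<dots> \<le> - (\<Sum>i\<in>?R. \<Sum>j\<in>?G. resid i j * W i j)"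
    using W missed_subset_S Good_subset_S S_sub
    by (simp add: resid_le_signed_A[OF missed_subset_S Good_subset_S] subset_iff)
  finally show ?thesis .
qed

text \<open>The SDP constraint, tested with the row selector of the missed vertices against the bad ones,
  bounds the weight they carry from above.\<close>

lemma missed_weight_upper:
  assumes lab: "is_labelling n l" and feas: "boost_feasible n A l \<zeta> d K \<rho> w W N"
    and budget: "bad_budget l \<le> \<zeta> * real n" and \<rho>: "\<rho> * real n \<le> bad_budget l"
  shows "10 * d * K^2 * (K * (\<Sum>i\<in>missed l w. 1 - w i) - bad_budget l)
    \<le> - (\<Sum>i\<in>missed l w. \<Sum>j\<in>Good l. resid i j * W i j)"
proof -
  let ?R = "missed l w" and ?G = "Good l" and ?B = "Bad l"
  have \<rho>0: "0 \<le> \<rho>" and \<rho>\<zeta>: "\<rho> \<le> \<zeta>" and W: "\<forall>i<n. \<forall>j<n. 0 \<le> W i j"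
    and cons: "\<And>\<rho>' M x. \<rho> / K \<le> \<rho>' \<Longrightarrow> \<rho>' \<le> \<zeta> \<Longrightarrow> row_selector n \<rho>' (K * \<rho>') M x \<Longrightarrow>
        10 * d * K^2 * (K * (\<Sum>i<n. x i * (1 - w i)) - \<rho>' * real n)
          \<le> (\<Sum>i<n. \<Sum>j<n. A i j * (l i * l j) * W i j * M i j)"
    using feas unfolding boost_feasible_def by blast+
  define \<rho>' where "\<rho>' = max \<rho> (real (card ?B) / real n)"
  have \<rho>'n: "\<rho>' * real n \<le> bad_budget l" "real (card ?B) \<le> \<rho>' * real n"
    using \<rho> card_Bad_le_budget[of l] n_pos unfolding \<rho>'_def by (auto simp: max_def field_simps)
  have \<rho>'\<zeta>: "\<rho>' \<le> \<zeta>" using \<rho>\<zeta> budget card_Bad_le_budget[of l] n_pos unfolding \<rho>'_def by (simp add: field_simps)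
  have "\<rho> \<le> \<rho> * K" using mult_left_mono[of 1 K \<rho>] \<rho>0 K_ge by simp
  then have "\<rho> / K \<le> \<rho>" using K_pos by (simp add: divide_le_eq)
  then have \<rho>K: "\<rho> / K \<le> \<rho>'" unfolding \<rho>'_def by linarith
  have sel: "row_selector n \<rho>' (K * \<rho>') (\<lambda>i j. (if i \<in> ?R then 1 else 0) - (if i \<in> ?R \<and> j \<in> ?B then 1 else 0))
      (\<lambda>i. if i \<in> ?R then 1 else 0)"
    using \<rho>'n(2) K_ge \<rho>0 unfolding \<rho>'_def
    by (intro row_selector_indicator[OF missed_subset_Bad Bad_subset]) (auto simp: \<rho>'_def)
  have "(\<Sum>i<n. (if i \<in> ?R then 1 else 0) * (1 - w i)) = (\<Sum>i<n. if i \<in> ?R then 1 - w i else 0)"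
    by (intro sum.cong) auto
  then have weight: "(\<Sum>i<n. (if i \<in> ?R then 1 else 0) * (1 - w i)) = (\<Sum>i\<in>?R. 1 - w i)"
    using sum_if_mem_subset[OF _ order_trans[OF missed_subset_Bad Bad_subset]] by simp
  have "(\<Sum>i<n. \<Sum>j<n. A i j * (l i * l j) * W i j * ((if i \<in> ?R then 1 else 0) - (if i \<in> ?R \<and> j \<in> ?B then 1 else 0)))
      \<le> - (\<Sum>i\<in>?R. \<Sum>j\<in>?G. resid i j * W i j)"
    using missed_selector_pairing_le[OF lab] W by blast
  then have "10 * d * K^2 * (K * (\<Sum>i\<in>?R. 1 - w i) - \<rho>' * real n) \<le> - (\<Sum>i\<in>?R. \<Sum>j\<in>?G. resid i j * W i j)"
    using cons[OF \<rho>K \<rho>'\<zeta> sel] unfolding weight by linarith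
  moreover have "10 * d * K^2 * (K * (\<Sum>i\<in>?R. 1 - w i) - bad_budget l)
      \<le> 10 * d * K^2 * (K * (\<Sum>i\<in>?R. 1 - w i) - \<rho>' * real n)"
    using \<rho>'n(1) d_pos by (intro mult_left_mono) auto
  ultimately show ?thesis by linarith
qed


lemma missed_resolvable_lower:
  assumes w01: "\<forall>i<n. 0 \<le> w i \<and> w i \<le> 1" and budget: "bad_budget l \<le> \<zeta> * real n"
  shows "10 * d * K^3 * (\<Sum>i\<in>missed l w. 1 - w i) - 0.5 * (K * d * bad_budget l)
    \<le> (\<Sum>i\<in>missed l w. \<Sum>j\<in>Good l. (1 - w i) * resid i j * 1)
      + (\<Sum>i\<in>missed l w. \<Sum>j\<in>missed l w. (1 - w i) * resid i j * 1)"
proof -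
  let ?R = "missed l w" and ?G = "Good l" and ?q = "bad_budget l"
  have fin_R: "finite ?R" and fin_G: "finite ?G"
    using finite_subset[OF missed_subset_S finite_S] finite_subset[OF Good_subset_S finite_S] by auto
  have w_R: "\<forall>i\<in>?R. 0 \<le> 1 - w i \<and> 1 - w i \<le> 1"
    using w01 missed_subset_S S_sub by (auto simp: subset_iff)
  have a_q: "(\<Sum>i\<in>?R. 1 - w i) \<le> ?q"
    using sum_mono[of ?R "\<lambda>i. 1 - w i" "\<lambda>_. 1"] w_R card_missed_le[of l w] by auto
  define x where "x i = (if i \<in> ?R then 1 - w i else 0)" for i
  have T: "?G \<union> ?R \<subseteq> S" using Good_subset_S missed_subset_S by blast
  have card_T: "real (card (?G \<union> ?R)) = real (card ?G) + real (card ?R)"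
    using card_Un_disjoint[OF fin_G fin_R] missed_Good_disjoint[of l w] by (simp add: Int_commute)
  have sum_x: "(\<Sum>i\<in>?G \<union> ?R. x i) = (\<Sum>i\<in>?R. 1 - w i)"
    using sum_if_mem_subset[of "?G \<union> ?R" ?R] fin_G fin_R unfolding x_def by auto
  have "(\<Sum>i\<in>?G \<union> ?R. \<Sum>j\<in>?G \<union> ?R. resid i j * x i)
      = (\<Sum>i\<in>?G \<union> ?R. if i \<in> ?R then (\<Sum>j\<in>?G \<union> ?R. (1 - w i) * resid i j * 1) else 0)"
    unfolding x_def by (intro sum.cong refl) (auto simp: mult_ac)
  also have "\<dots> = (\<Sum>i\<in>?R. \<Sum>j\<in>?G \<union> ?R. (1 - w i) * resid i j * 1)"
    using fin_G fin_R by (intro sum_if_mem_subset) auto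
  also have "\<dots> = (\<Sum>i\<in>?R. \<Sum>j\<in>?G. (1 - w i) * resid i j * 1) + (\<Sum>i\<in>?R. \<Sum>j\<in>?R. (1 - w i) * resid i j * 1)"
    using missed_Good_disjoint[of l w] fin_G fin_R by (simp add: sum.union_disjoint Int_commute sum.distrib)
  moreover have "\<gamma> * real n + (real n - real (card (?G \<union> ?R))) \<le> ?q"
    using card_T card_Good[of l] unfolding bad_budget_def by simp
  then have "0.5 * d * K * (\<gamma> * real n + (real n - real (card (?G \<union> ?R)))) \<le> 0.5 * (K * d * ?q)"
    using mult_left_mono[of _ ?q "0.5 * d * K"] d_pos K_pos by (simp add: mult_ac)
  moreover have "(1 - \<zeta>) * real n \<le> real (card (?G \<union> ?R))" using card_Good_ge[OF budget] card_T by simp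
  moreover have "\<forall>i\<in>?G \<union> ?R. 0 \<le> x i \<and> x i \<le> 1" using w_R unfolding x_def by auto
  moreover have "(\<Sum>i\<in>?G \<union> ?R. x i) \<le> \<zeta> * real n" using sum_x a_q budget by linarith
  ultimately show ?thesis using resolvable_lower_bound[OF T, of x] unfolding sum_x by linarith
qed

text \<open>Resolvability on the good vertices together with the missed ones bounds the same weight from
  below; the cross terms of W = 1 - w i - w j + N are controlled by the residual estimates.\<close>

lemma missed_weight_lower:
  assumes feas: "boost_feasible n A l \<zeta> d K \<rho> w W N"
    and budget: "bad_budget l \<le> \<zeta> * real n" and \<rho>: "\<rho> * real n \<le> bad_budget l"
  shows "10 * d * K^3 * (\<Sum>i\<in>missed l w. 1 - w i) - 6.5 * (K * d * bad_budget l)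
    \<le> (\<Sum>i\<in>missed l w. \<Sum>j\<in>Good l. resid i j * W i j)"
proof -
  let ?R = "missed l w" and ?G = "Good l" and ?q = "bad_budget l"
  have \<rho>0: "0 \<le> \<rho>" and \<rho>\<zeta>: "\<rho> \<le> \<zeta>" and N: "pseudorect n \<rho> N" and w01: "\<forall>i<n. 0 \<le> w i \<and> w i \<le> 1"
    and sum_w: "(\<Sum>i<n. w i) \<le> \<rho> * real n" and W: "\<forall>i<n. \<forall>j<n. W i j = 1 - w i - w j + N i j"
    using feas unfolding boost_feasible_def by blast+
  have R_n: "?R \<subseteq> {..<n}" using missed_subset_S S_sub by blast
  have w_R: "\<forall>i\<in>?R. 0 \<le> 1 - w i \<and> 1 - w i \<le> 1" and w_G: "\<forall>j\<in>?G. 0 \<le> w j \<and> w j \<le> 1"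
    using w01 R_n Good_subset by (auto simp: subset_iff)
  have r_q: "real (card ?R) \<le> ?q" by (rule card_missed_le)
  have a_q: "(\<Sum>i\<in>?R. 1 - w i) \<le> ?q"
    using sum_mono[of ?R "\<lambda>i. 1 - w i" "\<lambda>_. 1"] w_R r_q by auto
  have split: "(\<Sum>i\<in>?R. \<Sum>j\<in>?G. resid i j * W i j) = (\<Sum>i\<in>?R. \<Sum>j\<in>?G. (1 - w i) * resid i j * 1)
      - (\<Sum>i\<in>?R. \<Sum>j\<in>?G. 1 * resid i j * w j) + (\<Sum>i\<in>?R. \<Sum>j\<in>?G. resid i j * N i j)"
    by (rule sum_rect_weight_split[OF R_n Good_subset W])
  have main: "10 * d * K^3 * (\<Sum>i\<in>?R. 1 - w i) - 0.5 * (K * d * ?q)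
      \<le> (\<Sum>i\<in>?R. \<Sum>j\<in>?G. (1 - w i) * resid i j * 1) + (\<Sum>i\<in>?R. \<Sum>j\<in>?R. (1 - w i) * resid i j * 1)"
    by (rule missed_resolvable_lower[OF w01 budget])
  have E1: "\<bar>\<Sum>i\<in>?R. \<Sum>j\<in>?R. (1 - w i) * resid i j * 1\<bar> \<le> 2 * K * d * ?q"
    using a_q r_q budget w_R by (intro resid_small_bilinear_le[OF missed_subset_S missed_subset_S]) auto
  have E2: "\<bar>\<Sum>i\<in>?R. \<Sum>j\<in>?G. 1 * resid i j * w j\<bar> \<le> 2 * K * d * ?q"
  proof (intro resid_small_bilinear_le[OF missed_subset_S Good_subset_S] ballI conjI)
    show "(\<Sum>j\<in>?G. w j) \<le> ?q"
      using sum_mono2[OF _ Good_subset[of l], of w] w01 sum_w \<rho> by fastforce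
  qed (use r_q budget w_G in auto)
  have E3: "\<bar>\<Sum>i\<in>?R. \<Sum>j\<in>?G. resid i j * N i j\<bar> \<le> 2 * K * d * ?q"
  proof -
    have "K * d * (\<rho> * real n) * (1 + \<rho> / \<zeta>) \<le> K * d * ?q * 2"
      using \<rho> \<rho>0 \<rho>\<zeta> \<zeta>_pos K_pos d_pos bad_budget_nonneg[of l]
      by (intro mult_mono mult_left_mono) (auto simp: divide_le_eq)
    then show ?thesis using resid_pseudorect_le[OF missed_subset_S[of l w] Good_subset_S[of l] N] by linarith
  qed
  have "2 * K * d * ?q = 2 * (K * d * ?q)" by simp
  then show ?thesis using split main abs_le_D1[OF E1] abs_le_D1[OF E2] abs_le_D1[OF E3]
    abs_le_D2[OF E1] abs_le_D2[OF E2] abs_le_D2[OF E3] by linarith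
qed

lemma missed_card_from_weight:
  assumes weight: "20 * d * K^3 * a \<le> 10 * d * K^2 * q + 6.5 * (K * d * q)"
    and a: "r / sqrt K \<le> a" and q: "0 \<le> q"
  shows "r \<le> 0.006 * q"
proof -
  define s where "s = sqrt K"
  have s: "100 \<le> s" "K = s^2" unfolding s_def using sqrt_K_ge K_pos by simp_all
  have "20 * d * K^3 * (r / s) \<le> 10 * d * K^2 * q + 6.5 * (K * d * q)"
    using weight mult_left_mono[OF a[folded s_def], of "20 * d * K^3"] d_pos K_pos by simp
  then have "(d * s^2) * (20 * s^3 * r) \<le> (d * s^2) * ((10 * s^2 + 6.5) * q)"
    unfolding s(2) using s(1) by (simp add: field_simps power2_eq_square power3_eq_cube)
  then have "20 * s^3 * r \<le> (10 * s^2 + 6.5) * q" using d_pos s(1) by simp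
  moreover have "10 * s^2 + 6.5 \<le> 0.12 * s^3"
  proof -
    have "10000 \<le> s * s" using mult_mono[OF s(1) s(1)] s(1) by simp
    then have "10 * s^2 + 6.5 \<le> 12 * s^2" by (simp add: power2_eq_square)
    also have "\<dots> \<le> 0.12 * s^2 * s" using s(1) by (simp add: power2_eq_square mult_left_mono)
    finally show ?thesis by (simp add: power2_eq_square power3_eq_cube mult_ac)
  qed
  then have "(10 * s^2 + 6.5) * q \<le> 0.12 * s^3 * q" using q by (rule mult_right_mono)
  ultimately have "20 * s^3 * r \<le> 0.12 * s^3 * q" by linarith
  then have "s^3 * (20 * r) \<le> s^3 * (0.12 * q)" by (simp add: mult_ac)
  moreover have "0 < s^3" using s(1) by simp
  ultimately have "20 * r \<le> 0.12 * q" by (simp add: mult_le_cancel_left_pos)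
  then show ?thesis by simp
qed

lemma card_missed_small:
  assumes lab: "is_labelling n l" and feas: "boost_feasible n A l \<zeta> d K \<rho> w W N"
    and budget: "bad_budget l \<le> \<zeta> * real n" and \<rho>: "\<rho> * real n \<le> bad_budget l"
  shows "real (card (missed l w)) \<le> 0.006 * bad_budget l"
proof (rule missed_card_from_weight)
  let ?a = "\<Sum>i\<in>missed l w. 1 - w i"
  show "20 * d * K^3 * ?a \<le> 10 * d * K^2 * bad_budget l + 6.5 * (K * d * bad_budget l)"
  proof -
    have "10 * d * K^2 * (K * ?a - bad_budget l) = 10 * d * K^3 * ?a - 10 * d * K^2 * bad_budget l"
      by (simp add: algebra_simps power2_eq_square power3_eq_cube)
    then show ?thesis using missed_weight_upper[OF assms] missed_weight_lower[OF feas budget \<rho>] by linarith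
  qed
  have "(\<Sum>i\<in>missed l w. 1 / sqrt K) \<le> ?a"
    by (intro sum_mono) (auto simp: missed_def)
  then show "real (card (missed l w)) / sqrt K \<le> ?a" by simp
  show "0 \<le> bad_budget l" by (rule bad_budget_nonneg)
qed


definition errors :: "(nat \<Rightarrow> real) \<Rightarrow> nat set" where
  "errors l = {i. i < n \<and> l i \<noteq> lt i}"

lemma finite_errors: "finite (errors l)"
  unfolding errors_def by simp

lemma card_outside_S: "real (card ({..<n} - S)) \<le> \<gamma> * real n"
  using card_Diff_subset[OF finite_S S_sub] card_mono[OF _ S_sub] S_card by (simp add: of_nat_diff algebra_simps)

lemma bad_budget_errors:
  "bad_budget l = real (card (errors l \<inter> S)) + real (card ({..<n} - S)) + \<gamma> * real n"
proof -
  have "Bad l = (errors l \<inter> S) \<union> ({..<n} - S)" "(errors l \<inter> S) \<inter> ({..<n} - S) = {}"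
    unfolding Bad_def errors_def using S_sub by auto
  then show ?thesis unfolding bad_budget_def
    using card_Un_disjoint[of "errors l \<inter> S" "{..<n} - S"] finite_errors[of l] by simp
qed

lemma card_errors_split: "real (card (errors l)) = real (card (errors l \<inter> S)) + real (card (errors l - S))"
  using card_Int_Diff[OF finite_errors, of l S] by simp

lemma card_errors_outside_S: "real (card (errors l - S)) \<le> \<gamma> * real n"
proof -
  have "errors l - S \<subseteq> {..<n} - S" unfolding errors_def by auto
  then have "card (errors l - S) \<le> card ({..<n} - S)" by (intro card_mono) auto
  then show ?thesis using card_outside_S by linarith
qed

text \<open>Every error after a round is either a correct label that was flipped or a wrong label that was
  not flipped; the latter lie outside S or are missed.\<close>

lemma card_errors_after_flip:
  assumes lab: "is_labelling n l"
    and flip: "\<forall>i<n. l' i = (if w i \<ge> 1 - 1 / sqrt K then - l i else l i)"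
  shows "real (card (errors l')) \<le> real (card {i. i < n \<and> w i \<ge> 1 - 1 / sqrt K})
    - real (card (errors l \<inter> S)) + 2 * real (card (missed l w)) + real (card (errors l - S))"
proof -
  let ?E = "errors l" and ?Fl = "{i. i < n \<and> w i \<ge> 1 - 1 / sqrt K}" and ?R = "missed l w"
  have fin: "finite ?Fl" "finite ?R" using finite_subset[OF missed_subset_S finite_S] by auto
  have "errors l' \<subseteq> (?Fl - ?E) \<union> (?E - ?Fl)"
  proof
    fix i assume "i \<in> errors l'"
    moreover have "i < n \<Longrightarrow> (l i = 1 \<or> l i = -1) \<and> (lt i = 1 \<or> lt i = -1)"
      using lab lt_labelling unfolding is_labelling_def by auto
    ultimately show "i \<in> (?Fl - ?E) \<union> (?E - ?Fl)" using flip unfolding errors_def by (auto split: if_splits)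
  qed
  then have "card (errors l') \<le> card ((?Fl - ?E) \<union> (?E - ?Fl))"
    using fin finite_errors[of l] by (intro card_mono) auto
  then have "card (errors l') \<le> card (?Fl - ?E) + card (?E - ?Fl)"
    using card_Un_le[of "?Fl - ?E" "?E - ?Fl"] by linarith
  moreover have "card (?Fl - ?E) + card (?Fl \<inter> ?E) = card ?Fl" using card_Int_Diff[OF fin(1), of ?E] by simp
  moreover have "card (?E \<inter> S) \<le> card (?Fl \<inter> ?E) + card ?R"
  proof -
    have "?E \<inter> S \<subseteq> (?Fl \<inter> ?E) \<union> ?R" unfolding errors_def missed_def by auto
    then have "card (?E \<inter> S) \<le> card ((?Fl \<inter> ?E) \<union> ?R)" using fin by (intro card_mono) auto
    then show ?thesis using card_Un_le[of "?Fl \<inter> ?E" ?R] by linarith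
  qed
  moreover have "card (?E - ?Fl) \<le> card ?R + card (?E - S)"
  proof -
    have "?E - ?Fl \<subseteq> ?R \<union> (?E - S)" unfolding errors_def missed_def by auto
    then have "card (?E - ?Fl) \<le> card (?R \<union> (?E - S))" using fin finite_errors[of l] by (intro card_mono) auto
    then show ?thesis using card_Un_le[of ?R "?E - S"] by linarith
  qed
  ultimately show ?thesis by linarith
qed

lemma card_flipped_le:
  assumes feas: "boost_feasible n A l \<zeta> d K \<rho> w W N"
  shows "0.99 * real (card {i. i < n \<and> w i \<ge> 1 - 1 / sqrt K}) \<le> \<rho> * real n"
proof -
  let ?Fl = "{i. i < n \<and> w i \<ge> 1 - 1 / sqrt K}"
  have w01: "\<forall>i<n. 0 \<le> w i \<and> w i \<le> 1" and sum_w: "(\<Sum>i<n. w i) \<le> \<rho> * real n"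
    using feas unfolding boost_feasible_def by blast+
  have "1 / sqrt K \<le> 1 / 100" using sqrt_K_ge K_pos by (intro divide_left_mono) auto
  then have "0.99 * real (card ?Fl) \<le> (\<Sum>i\<in>?Fl. w i)"
    using sum_mono[of ?Fl "\<lambda>_. 0.99" w] by fastforce
  also have "\<dots> \<le> (\<Sum>i<n. w i)" using w01 by (intro sum_mono2) auto
  finally show ?thesis using sum_w by linarith
qed

lemma round_contracts_errors:
  assumes lab: "is_labelling n l" and err: "real (card (errors l)) \<le> 0.8 * \<zeta> * real n"
    and step: "boost_step n A \<zeta> d K l l'"
  shows "is_labelling n l'" and "real (card (errors l')) \<le> real (card (errors l)) / 40 + 4 * \<gamma> * real n"
proof -
  obtain \<rho> w W N where opt: "boost_optimal n A l \<zeta> d K \<rho> w W N"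
    and flip: "\<forall>i<n. l' i = (if w i \<ge> 1 - 1 / sqrt K then - l i else l i)"
    using step unfolding boost_step_def by blast
  have feas: "boost_feasible n A l \<zeta> d K \<rho> w W N" using opt unfolding boost_optimal_def by blast
  show "is_labelling n l'" using lab flip unfolding is_labelling_def by auto
  have \<gamma>n: "\<gamma> * real n \<le> 0.1 * \<zeta> * real n" using \<gamma>_le by (intro mult_right_mono) auto
  have budget: "bad_budget l \<le> \<zeta> * real n"
    using bad_budget_errors[of l] card_errors_split[of l] card_outside_S err \<gamma>n by linarith
  have \<rho>: "\<rho> * real n \<le> bad_budget l" by (rule sdp_value_le[OF budget opt])
  have "99 * real (card {i. i < n \<and> w i \<ge> 1 - 1 / sqrt K}) \<le> 100 * (\<rho> * real n)"
    using card_flipped_le[OF feas] by simp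
  moreover have "1000 * real (card (missed l w)) \<le> 6 * bad_budget l"
    using card_missed_small[OF lab feas budget \<rho>] by simp
  moreover have "0 \<le> \<gamma> * real n" using \<gamma>_nonneg by simp
  ultimately show "real (card (errors l')) \<le> real (card (errors l)) / 40 + 4 * \<gamma> * real n"
    using card_errors_after_flip[OF lab flip] \<rho> bad_budget_errors[of l] card_errors_split[of l]
      card_outside_S card_errors_outside_S[of l] of_nat_0_le_iff[of "card (errors l \<inter> S)"]
    by linarith
qed


lemma errors_after_rounds:
  assumes lab: "is_labelling n (seq 0)" and init: "real (card (errors (seq 0))) \<le> 0.1 * \<zeta> * real n"
    and steps: "\<forall>t<T. boost_step n A \<zeta> d K (seq t) (seq (Suc t))"
  shows "t \<le> T \<Longrightarrow> is_labelling n (seq t) \<and>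
    real (card (errors (seq t))) \<le> (1/40)^t * real (card (errors (seq 0))) + 160/39 * \<gamma> * real n"
proof (induction t)
  case 0
  then show ?case using lab \<gamma>_nonneg by simp
next
  case (Suc t)
  then have lab_t: "is_labelling n (seq t)"
    and err_t: "real (card (errors (seq t))) \<le> (1/40)^t * real (card (errors (seq 0))) + 160/39 * \<gamma> * real n"
    by auto
  have "(1/40)^t * real (card (errors (seq 0))) \<le> real (card (errors (seq 0)))"
    by (simp add: mult_left_le_one_le power_le_one)
  moreover have "\<gamma> * real n \<le> 0.1 * \<zeta> * real n" using \<gamma>_le by (intro mult_right_mono) auto
  ultimately have "real (card (errors (seq t))) \<le> 0.8 * \<zeta> * real n" using err_t init by linarith
  moreover have "boost_step n A \<zeta> d K (seq t) (seq (Suc t))" using steps Suc.prems by simp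
  ultimately have "is_labelling n (seq (Suc t))"
    and "real (card (errors (seq (Suc t)))) \<le> real (card (errors (seq t))) / 40 + 4 * \<gamma> * real n"
    using round_contracts_errors[OF lab_t] by blast+
  moreover have "real (card (errors (seq t))) / 40
      \<le> (1/40)^(Suc t) * real (card (errors (seq 0))) + 4/39 * \<gamma> * real n"
    using divide_right_mono[OF err_t, of 40] by (simp add: field_simps)
  ultimately show ?case by simp
qed

lemma boosting_output_agreements:
  assumes lab: "is_labelling n linit" and init: "real (agreements n linit lt) \<ge> (1 - 0.1 * \<zeta>) * real n"
    and out: "boosting_output n A \<zeta> d K linit lout"
  shows "real (agreements n lout lt) \<ge> (1 - 8 * \<gamma>) * real n"
proof -
  define T where "T = nat \<lceil>10 * ln (real n)\<rceil>"
  obtain seq where seq0: "\<forall>i<n. seq 0 i = linit i"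
    and steps: "\<forall>t<T. boost_step n A \<zeta> d K (seq t) (seq (Suc t))" and seqT: "\<forall>i<n. lout i = seq T i"
    using out unfolding boosting_output_def T_def by blast
  have agree: "real (agreements n l lt) + real (card (errors l)) = real n" for l
    using agreements_add_disagreements[of n l lt] unfolding errors_def by simp
  have "agreements n (seq 0) lt = agreements n linit lt" "agreements n (seq T) lt = agreements n lout lt"
    using seq0 seqT unfolding agreements_def by (auto intro!: arg_cong[where f = card])
  then have err0: "real (card (errors (seq 0))) \<le> 0.1 * \<zeta> * real n"
    and errT: "real (agreements n lout lt) = real n - real (card (errors (seq T)))"
    using agree[of "seq 0"] agree[of "seq T"] init by (simp_all add: algebra_simps)
  have "is_labelling n (seq 0)" using lab seq0 unfolding is_labelling_def by simp
  then have bound: "real (card (errors (seq T))) \<le> (1/40)^T * real (card (errors (seq 0))) + 160/39 * \<gamma> * real n"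
    using errors_after_rounds[OF _ err0 steps] by blast
  have "(1/40)^T * real (card (errors (seq 0))) = real (card (errors (seq 0))) / 40^T"
    by (simp add: power_one_over)
  also have "\<dots> \<le> real (card (errors (seq 0))) / real n"
    using le_40_pow_rounds[OF n_pos] n_pos unfolding T_def by (intro divide_left_mono) auto
  also have "\<dots> \<le> 0.1 * \<zeta>" using err0 n_pos by (simp add: divide_le_eq)
  also have "\<dots> \<le> 1 / 1000000000" using \<zeta>_tiny by simp
  finally have lt1: "real (card (errors (seq T))) \<le> 1 / 1000000000 + 160/39 * (\<gamma> * real n)"
    using bound by (simp add: mult.assoc)
  have "card (errors (seq T)) \<le> 8 * (\<gamma> * real n)"
  proof (cases "card (errors (seq T)) = 0")
    case False
    then have "1 \<le> real (card (errors (seq T)))" by simp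
    then show ?thesis using lt1 by linarith
  qed (use \<gamma>_nonneg in simp)
  then show ?thesis using errT by (simp add: algebra_simps)
qed

end

theorem mainTheorem14:
  fixes n :: nat and A F :: "nat \<Rightarrow> nat \<Rightarrow> real"
    and \<zeta> d K \<gamma> :: real and S :: "nat set"
    and linit lt lout :: "nat \<Rightarrow> real"
  assumes "0 < \<zeta>" "\<zeta> < 1" "0 < d" "K \<ge> 10^4"
    and "is_labelling n linit" "is_labelling n lt"
    and "S \<subseteq> {..<n}" "real (card S) \<ge> (1 - \<gamma>) * real n" "\<gamma> \<le> 0.1 * \<zeta>"
    and "real (agreements n linit lt) \<ge> (1 - 0.1 * \<zeta>) * real n"
    and "\<forall>i\<in>S. \<forall>j\<in>S. F i j * (lt i * lt j) \<ge> 0"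
    and "\<exists>Y Z. (\<forall>i\<in>S. \<forall>j\<in>S. A i j - F i j = Y i j + Z i j) \<and>
               op_norm_on S Y \<le> K * d \<and>
               (\<forall>i\<in>S. \<forall>j\<in>S. \<bar>Z i j\<bar> \<le> K * d / (\<zeta> * real n))"
    and "\<forall>T. T \<subseteq> S \<and> real (card T) \<ge> (1 - \<zeta>) * real n \<longrightarrow>
           resolvable_on T (\<lambda>i j. (A i j - F i j) * (lt i * lt j))
             (10 * d * K^3) (0.5 * d * K * (\<gamma> + (real n - real (card T)) / real n))"
    and "boosting_output n A \<zeta> d K linit lout"
  shows "real (agreements n lout lt) \<ge> (1 - 8 * \<gamma>) * real n"
proof (cases "n = 0")
  case False
  obtain Y Z where "\<forall>i\<in>S. \<forall>j\<in>S. A i j - F i j = Y i j + Z i j" "op_norm_on S Y \<le> K * d"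
    "\<forall>i\<in>S. \<forall>j\<in>S. \<bar>Z i j\<bar> \<le> K * d / (\<zeta> * real n)"
    using assms(12) by blast
  then interpret boosting_setting n A F Y Z \<zeta> d K \<gamma> S lt
    using assms False by unfold_locales auto
  show ?thesis using boosting_output_agreements assms(5,10,14) by blast
qed simp

end
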